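(* Let $\Bbbk=\mathbb{K}_0\subsetneq\mathbb{K}_1\subsetneq\cdots\subsetneq\mathbb{K}_m$ be a tower of fields with $[\mathbb{K}_j:\mathbb{K}_{j-1}]=2$ for $j=1,\dots,m$, and let $n\ge1$. There exists an algorithm for the inversion of a generic element of $M_n(\mathbb{K}_m)$ which costs $3(3^m-2^m)$ multiplications and $2^m$ inversions in $M_n(\Bbbk)$.
   Context: $M_n(\mathbb{L})$ denotes $n\times n$ matrices over $\mathbb{L}$. For each $j$, $\mathbb{K}_j=\mathbb{K}_{j-1}[\xi_j]$ where the minimal polynomial of $\xi_j$ over $\mathbb{K}_{j-1}$ is in normal form $x^2+\tau_j$ or $x^2+x+\tau_j$. "Generic" means for all elements outside a proper Zariski-closed subset of $M_n(\mathbb{K}_m)\cong\Bbbk^{2^m n^2}$. Additions and scalar multiplications are not counted. *)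

theory Defs
  imports "Jordan_Normal_Form.Matrix"
begin

definition is_subfield :: "'a::field set \<Rightarrow> bool" where
  "is_subfield S \<longleftrightarrow> 0 \<in> S \<and> 1 \<in> S \<and>
     (\<forall>x\<in>S. \<forall>y\<in>S. x + y \<in> S \<and> x * y \<in> S) \<and>
     (\<forall>x\<in>S. - x \<in> S \<and> inverse x \<in> S)"

definition is_basis_over :: "'a::field set \<Rightarrow> 'a set \<Rightarrow> (nat \<Rightarrow> 'a) \<Rightarrow> nat \<Rightarrow> bool" where
  "is_basis_over F E b N \<longleftrightarrow> (\<forall>i<N. b i \<in> E) \<and>
     (\<forall>x\<in>E. \<exists>!c. (\<forall>i<N. c i \<in> F) \<and> (\<forall>i\<ge>N. c i = 0) \<and> x = (\<Sum>i<N. c i * b i))"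

definition ext_degree_eq :: "'a::field set \<Rightarrow> 'a set \<Rightarrow> nat \<Rightarrow> bool" where
  "ext_degree_eq F E d \<longleftrightarrow> F \<subseteq> E \<and> (\<exists>b. is_basis_over F E b d)"

section \<open>Coordinates: M_n(K_m) identified with M_n(k)^N via a k-basis of K_m\<close>

definition assemble :: "nat \<Rightarrow> (nat \<Rightarrow> 'a::field) \<Rightarrow> 'a mat list \<Rightarrow> 'a mat" where
  "assemble n b Xs = mat n n (\<lambda>(r,s). \<Sum>i<length Xs. b i * (Xs ! i) $$ (r,s))"

definition coord_space :: "'a::field set \<Rightarrow> nat \<Rightarrow> nat \<Rightarrow> 'a mat list set" where
  "coord_space F N n = {Xs. length Xs = N \<and>
     (\<forall>X\<in>set Xs. X \<in> carrier_mat n n \<and> (\<forall>r<n. \<forall>s<n. X $$ (r,s) \<in> F))}"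

inductive_set polyfun :: "'a::field set \<Rightarrow> nat \<Rightarrow> nat \<Rightarrow> ('a mat list \<Rightarrow> 'a) set"
  for F :: "'a set" and N n :: nat where
  pf_const: "c \<in> F \<Longrightarrow> (\<lambda>_. c) \<in> polyfun F N n"
| pf_var: "i < N \<Longrightarrow> r < n \<Longrightarrow> s < n \<Longrightarrow> (\<lambda>Xs. (Xs ! i) $$ (r,s)) \<in> polyfun F N n"
| pf_add: "f \<in> polyfun F N n \<Longrightarrow> g \<in> polyfun F N n \<Longrightarrow> (\<lambda>Xs. f Xs + g Xs) \<in> polyfun F N n"
| pf_mul: "f \<in> polyfun F N n \<Longrightarrow> g \<in> polyfun F N n \<Longrightarrow> (\<lambda>Xs. f Xs * g Xs) \<in> polyfun F N n"

definition zariski_closed :: "'a::field set \<Rightarrow> nat \<Rightarrow> nat \<Rightarrow> 'a mat list set \<Rightarrow> bool" where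
  "zariski_closed F N n Z \<longleftrightarrow>
     (\<exists>P \<subseteq> polyfun F N n. Z = {Xs \<in> coord_space F N n. \<forall>f\<in>P. f Xs = 0})"

definition generic :: "'a::field set \<Rightarrow> nat \<Rightarrow> nat \<Rightarrow> ('a mat list \<Rightarrow> bool) \<Rightarrow> bool" where
  "generic F N n Q \<longleftrightarrow> (\<exists>Z. zariski_closed F N n Z \<and> Z \<noteq> coord_space F N n \<and>
     (\<forall>Xs \<in> coord_space F N n - Z. Q Xs))"

text \<open>Lin: F-linear combination of earlier values (free); Const c: the scalar matrix c*I (free);
  Mul i j: product (counted); Inv i: inverse (counted, fails if not invertible).\<close>
datatype 'a instr = Lin "('a \<times> nat) list" | Const 'a | Mul nat nat | Inv nat

fun exec_instr :: "nat \<Rightarrow> 'a::field mat list \<Rightarrow> 'a instr \<Rightarrow> 'a mat option" where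
  "exec_instr n vs (Lin cs) =
     (if (\<forall>p\<in>set cs. snd p < length vs)
      then Some (mat n n (\<lambda>(r,s). \<Sum>p\<leftarrow>cs. fst p * (vs ! snd p) $$ (r,s)))
      else None)"
| "exec_instr n vs (Const c) = Some (c \<cdot>\<^sub>m 1\<^sub>m n)"
| "exec_instr n vs (Mul i j) =
     (if i < length vs \<and> j < length vs then Some (vs ! i * vs ! j) else None)"
| "exec_instr n vs (Inv i) =
     (if i < length vs \<and> (\<exists>B. B \<in> carrier_mat n n \<and> vs ! i * B = 1\<^sub>m n \<and> B * vs ! i = 1\<^sub>m n)
      then Some (SOME B. B \<in> carrier_mat n n \<and> vs ! i * B = 1\<^sub>m n \<and> B * vs ! i = 1\<^sub>m n)
      else None)"

text \<open>Run a program; the value list starts with the inputs, each instruction appends one value.\<close>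
fun run :: "nat \<Rightarrow> 'a::field instr list \<Rightarrow> 'a mat list \<Rightarrow> 'a mat list option" where
  "run n [] vs = Some vs"
| "run n (ins # p) vs =
     (case exec_instr n vs ins of None \<Rightarrow> None | Some v \<Rightarrow> run n p (vs @ [v]))"

fun instr_over :: "'a set \<Rightarrow> 'a instr \<Rightarrow> bool" where
  "instr_over F (Lin cs) = (\<forall>p\<in>set cs. fst p \<in> F)"
| "instr_over F (Const c) = (c \<in> F)"
| "instr_over F (Mul i j) = True"
| "instr_over F (Inv i) = True"

definition prog_over :: "'a set \<Rightarrow> 'a instr list \<Rightarrow> bool" where
  "prog_over F p \<longleftrightarrow> (\<forall>ins\<in>set p. instr_over F ins)"

fun is_mul :: "'a instr \<Rightarrow> bool" where
  "is_mul (Mul i j) = True" | "is_mul _ = False"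

fun is_inv :: "'a instr \<Rightarrow> bool" where
  "is_inv (Inv i) = True" | "is_inv _ = False"

definition count_mul :: "'a instr list \<Rightarrow> nat" where
  "count_mul p = length (filter is_mul p)"

definition count_inv :: "'a instr list \<Rightarrow> nat" where
  "count_inv p = length (filter is_inv p)"

end

theory Submission
  imports Defs "Jordan_Normal_Form.Determinant"
begin

(* An element of M_n(K_j) is written X = A + \<xi> B with A, B in M_n(K_(j-1)), where
   \<xi>^2 + \<sigma> \<xi> + \<tau> = 0. Karatsuba's identity
     (A + \<xi> B)(C + \<xi> D) = (AC - \<tau> BD) + \<xi> ((A + B)(C + D) - AC - (1 + \<sigma>) BD)
   multiplies at level j with three products at level j - 1, hence with 3^m products over k.
   With W = (A - \<sigma> B)^-1 B and C the inverse of A + \<tau> B W, the Schur complement of A - \<sigma> B in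
   the 2 x 2 block matrix of X over K_(j-1), one has
     (A + \<xi> B)^-1 = C - \<xi> W C,
   which costs two inversions and three products at level j - 1; unrolled, this gives 2^m inversions
   and 3 (3^m - 2^m) products over k. All intermediate values of the resulting straight-line program
   are rational functions of the input coordinates with a common denominator, and the program fails
   exactly where that denominator vanishes. This Zariski-closed set is proper because the program runs
   on the identity matrix. *)

lemma subfield_0: "is_subfield F \<Longrightarrow> 0 \<in> F"
  and subfield_1: "is_subfield F \<Longrightarrow> 1 \<in> F"
  and subfield_add: "is_subfield F \<Longrightarrow> x \<in> F \<Longrightarrow> y \<in> F \<Longrightarrow> x + y \<in> F"
  and subfield_mult: "is_subfield F \<Longrightarrow> x \<in> F \<Longrightarrow> y \<in> F \<Longrightarrow> x * y \<in> F"
  and subfield_uminus: "is_subfield F \<Longrightarrow> x \<in> F \<Longrightarrow> - x \<in> F"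
  and subfield_inverse: "is_subfield F \<Longrightarrow> x \<in> F \<Longrightarrow> inverse x \<in> F"
  unfolding is_subfield_def by auto

lemma subfield_diff: "is_subfield F \<Longrightarrow> x \<in> F \<Longrightarrow> y \<in> F \<Longrightarrow> x - y \<in> F"
  by (metis diff_conv_add_uminus subfield_add subfield_uminus)

lemma subfield_divide: "is_subfield F \<Longrightarrow> x \<in> F \<Longrightarrow> y \<in> F \<Longrightarrow> x / y \<in> F"
  by (metis divide_inverse subfield_inverse subfield_mult)

lemma subfield_sum: "is_subfield F \<Longrightarrow> (\<And>i. i \<in> A \<Longrightarrow> f i \<in> F) \<Longrightarrow> sum f A \<in> F"
  by (induction A rule: infinite_finite_induct) (auto intro: subfield_0 subfield_add)

lemma subfield_prod: "is_subfield F \<Longrightarrow> (\<And>i. i \<in> A \<Longrightarrow> f i \<in> F) \<Longrightarrow> prod f A \<in> F"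
  by (induction A rule: infinite_finite_induct) (auto intro: subfield_1 subfield_mult)

lemma subfield_sum_list: "is_subfield F \<Longrightarrow> (\<And>x. x \<in> set xs \<Longrightarrow> f x \<in> F) \<Longrightarrow> (\<Sum>x\<leftarrow>xs. f x) \<in> F"
  by (induction xs) (auto intro: subfield_0 subfield_add)

lemma subfield_power: "is_subfield F \<Longrightarrow> x \<in> F \<Longrightarrow> x ^ k \<in> F"
  by (induction k) (auto intro: subfield_1 subfield_mult)

lemma subfield_signof: "is_subfield F \<Longrightarrow> signof p \<in> F"
  by (auto simp: sign_def intro: subfield_1 subfield_uminus)

lemma subfield_det:
  assumes F: "is_subfield F" and A: "A \<in> carrier_mat k k" and e: "\<And>r s. r < k \<Longrightarrow> s < k \<Longrightarrow> A $$ (r,s) \<in> F"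
  shows "det A \<in> F"
  unfolding det_def'[OF A]
  by (intro subfield_sum[OF F] subfield_mult[OF F] subfield_signof[OF F] subfield_prod[OF F] e)
    (auto dest: permutes_in_image)

lemma polyfun_sum:
  "is_subfield F \<Longrightarrow> (\<And>i. i \<in> A \<Longrightarrow> f i \<in> polyfun F N n) \<Longrightarrow> (\<lambda>x. \<Sum>i\<in>A. f i x) \<in> polyfun F N n"
proof (induction A rule: infinite_finite_induct)
  case (insert a A)
  then show ?case using pf_add[of "f a" F N n "\<lambda>x. \<Sum>i\<in>A. f i x"] by simp
qed (simp_all add: pf_const subfield_0)

lemma polyfun_prod:
  "is_subfield F \<Longrightarrow> (\<And>i. i \<in> A \<Longrightarrow> f i \<in> polyfun F N n) \<Longrightarrow> (\<lambda>x. \<Prod>i\<in>A. f i x) \<in> polyfun F N n"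
proof (induction A rule: infinite_finite_induct)
  case (insert a A)
  then show ?case using pf_mul[of "f a" F N n "\<lambda>x. \<Prod>i\<in>A. f i x"] by simp
qed (simp_all add: pf_const subfield_1)

lemma polyfun_sum_list:
  "is_subfield F \<Longrightarrow> (\<And>c. c \<in> set cs \<Longrightarrow> f c \<in> polyfun F N n) \<Longrightarrow> (\<lambda>x. \<Sum>c\<leftarrow>cs. f c x) \<in> polyfun F N n"
proof (induction cs)
  case (Cons a cs)
  then show ?case using pf_add[of "f a" F N n "\<lambda>x. \<Sum>c\<leftarrow>cs. f c x"] by simp
qed (simp add: pf_const subfield_0)

lemma polyfun_scale: "c \<in> F \<Longrightarrow> f \<in> polyfun F N n \<Longrightarrow> (\<lambda>x. c * f x) \<in> polyfun F N n"
  using pf_mul[OF pf_const] by blast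

lemma polyfun_det:
  assumes F: "is_subfield F" and M: "\<And>x. M x \<in> carrier_mat k k"
    and e: "\<And>r s. r < k \<Longrightarrow> s < k \<Longrightarrow> (\<lambda>x. M x $$ (r,s)) \<in> polyfun F N n"
  shows "(\<lambda>x. det (M x)) \<in> polyfun F N n"
proof -
  have "(\<lambda>x. det (M x)) =
      (\<lambda>x. \<Sum>\<pi>\<in>{\<pi>. \<pi> permutes {0..<k}}. signof \<pi> * (\<Prod>i\<in>{0..<k}. M x $$ (i, \<pi> i)))"
    using det_def'[OF M] by simp
  also have "\<dots> \<in> polyfun F N n"
    by (intro polyfun_sum[OF F] polyfun_scale[OF subfield_signof[OF F]] polyfun_prod[OF F] e)
      (auto dest: permutes_in_image)
  finally show ?thesis .
qed

lemma polyfun_cofactor: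
  assumes F: "is_subfield F" and e: "\<And>r s. r < k \<Longrightarrow> s < k \<Longrightarrow> Q r s \<in> polyfun F N n"
  shows "(\<lambda>x. cofactor (mat k k (\<lambda>(r,s). Q r s x)) i j) \<in> polyfun F N n"
  unfolding cofactor_def
proof (intro polyfun_scale polyfun_det[OF F])
  show "(- 1) ^ (i + j) \<in> F" by (intro subfield_power subfield_uminus subfield_1 F)
  fix x show "mat_delete (mat k k (\<lambda>(r,s). Q r s x)) i j \<in> carrier_mat (k - 1) (k - 1)"
    by (intro mat_delete_carrier) simp
next
  fix r s assume "r < k - 1" "s < k - 1"
  then show "(\<lambda>x. mat_delete (mat k k (\<lambda>(r,s). Q r s x)) i j $$ (r, s)) \<in> polyfun F N n"
    by (simp add: mat_delete_def e)
qed

lemma one_smult_mat[simp]: "(1::'a::monoid_mult) \<cdot>\<^sub>m A = A"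
  by (rule eq_matI) auto

lemma mat_inverse_unique:
  assumes A: "(A::'a::field mat) \<in> carrier_mat n n" and B: "B \<in> carrier_mat n n" and C: "C \<in> carrier_mat n n"
    and BA: "B * A = 1\<^sub>m n" and AC: "A * C = 1\<^sub>m n"
  shows "B = C"
proof -
  have "B = B * (A * C)" using AC B by simp
  also have "\<dots> = (B * A) * C" using A B C by (simp add: assoc_mult_mat)
  also have "\<dots> = C" using BA C by simp
  finally show ?thesis .
qed

lemma smult_inverse_pair:
  assumes "A \<in> carrier_mat n n" "B \<in> carrier_mat n n" "A * B = d \<cdot>\<^sub>m 1\<^sub>m n" "a * b * d = (1::'a::field)"
  shows "(a \<cdot>\<^sub>m A) * (b \<cdot>\<^sub>m B) = 1\<^sub>m n"
proof -
  have "(a \<cdot>\<^sub>m A) * (b \<cdot>\<^sub>m B) = a \<cdot>\<^sub>m (b \<cdot>\<^sub>m (d \<cdot>\<^sub>m 1\<^sub>m n))"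
    using mult_smult_assoc_mat[OF assms(1), of "b \<cdot>\<^sub>m B" n] mult_smult_distrib[OF assms(1,2)] assms(2,3)
    by simp
  also have "\<dots> = 1\<^sub>m n"
    by (rule eq_matI) (auto simp: assms(4) mult.assoc[symmetric])
  finally show ?thesis .
qed

lemma adj_mat_inverse:
  assumes A: "(A::'a::field mat) \<in> carrier_mat n n" and d: "det A \<noteq> 0"
  shows "A * ((1 / det A) \<cdot>\<^sub>m adj_mat A) = 1\<^sub>m n" "((1 / det A) \<cdot>\<^sub>m adj_mat A) * A = 1\<^sub>m n"
  using smult_inverse_pair[OF A adj_mat(1,2)[OF A], of 1 "1 / det A"]
    smult_inverse_pair[OF adj_mat(1)[OF A] A adj_mat(3)[OF A], of "1 / det A" 1] d
  by simp_all

lemma inverse_entries_in_subfield: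
  assumes F: "is_subfield F" and X: "X \<in> carrier_mat n n" and e: "\<And>r s. r < n \<Longrightarrow> s < n \<Longrightarrow> X $$ (r,s) \<in> F"
    and B: "B \<in> carrier_mat n n" "X * B = 1\<^sub>m n" and rs: "r < n" "s < n"
  shows "B $$ (r,s) \<in> F"
proof -
  have "det X \<noteq> 0" using det_mult[OF X B(1)] B(2) by (auto simp: det_one)
  then have "B = (1 / det X) \<cdot>\<^sub>m adj_mat X"
    using mat_inverse_unique[OF X] B adj_mat_inverse[OF X] mat_mult_left_right_inverse[OF X B(1,2)] adj_mat(1)[OF X]
    by auto
  then have "B $$ (r,s) = (1 / det X) * cofactor X s r"
    using X rs by (simp add: adj_mat_def)
  also have "\<dots> \<in> F"
    unfolding cofactor_def using X e rs
    by (intro subfield_mult[OF F] subfield_divide[OF F] subfield_1[OF F] subfield_det[OF F X]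
        subfield_power[OF F] subfield_uminus[OF F] subfield_det[OF F mat_delete_carrier[OF X]])
      (auto simp: mat_delete_def)
  finally show ?thesis .
qed

lemma mult_mat_index:
  "X \<in> carrier_mat n n \<Longrightarrow> Y \<in> carrier_mat n n \<Longrightarrow> r < n \<Longrightarrow> s < n \<Longrightarrow>
   (X * Y) $$ (r,s) = (\<Sum>k<n. X $$ (r,k) * Y $$ (k,s))"
  by (simp add: scalar_prod_def atLeast0LessThan)

lemma quadratic_mult_mat:
  fixes A B C D :: "'a::field mat"
  assumes carrier: "A \<in> carrier_mat n n" "B \<in> carrier_mat n n" "C \<in> carrier_mat n n" "D \<in> carrier_mat n n"
    and root: "\<xi> * \<xi> + \<sigma> * \<xi> + \<tau> = 0"
  shows "(A + \<xi> \<cdot>\<^sub>m B) * (C + \<xi> \<cdot>\<^sub>m D) =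
    (A * C + (- \<tau>) \<cdot>\<^sub>m (B * D)) + \<xi> \<cdot>\<^sub>m (A * D + B * C + (- \<sigma>) \<cdot>\<^sub>m (B * D))" (is "?L = ?R")
proof (rule eq_matI)
  fix r s assume "r < dim_row ?R" "s < dim_col ?R"
  then have rs: "r < n" "s < n" using carrier by auto
  define a b c d where "a k = A $$ (r,k)" "b k = B $$ (r,k)" "c k = C $$ (k,s)" "d k = D $$ (k,s)" for k
  have pointwise: "(a k + \<xi> * b k) * (c k + \<xi> * d k) =
      a k * c k - \<tau> * (b k * d k) + \<xi> * (a k * d k + b k * c k - \<sigma> * (b k * d k))" for k
  proof -
    have "(a k + \<xi> * b k) * (c k + \<xi> * d k) -
        (a k * c k - \<tau> * (b k * d k) + \<xi> * (a k * d k + b k * c k - \<sigma> * (b k * d k))) =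
        b k * d k * (\<xi> * \<xi> + \<sigma> * \<xi> + \<tau>)"
      by (simp add: algebra_simps)
    then show ?thesis using root by simp
  qed
  have "?L $$ (r,s) = (\<Sum>k<n. (a k + \<xi> * b k) * (c k + \<xi> * d k))"
    using carrier rs by (simp add: scalar_prod_def atLeast0LessThan a_b_c_d_def)
  also have "\<dots> = (\<Sum>k<n. a k * c k - \<tau> * (b k * d k) + \<xi> * (a k * d k + b k * c k - \<sigma> * (b k * d k)))"
    by (simp only: pointwise)
  also have "\<dots> = (\<Sum>k<n. a k * c k) - \<tau> * (\<Sum>k<n. b k * d k) +
      \<xi> * ((\<Sum>k<n. a k * d k) + (\<Sum>k<n. b k * c k) - \<sigma> * (\<Sum>k<n. b k * d k))"
    by (simp add: sum.distrib sum_subtractf sum_distrib_left distrib_left right_diff_distrib)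
  also have "\<dots> = ?R $$ (r,s)"
    using carrier rs by (simp add: mult_mat_index[of _ n] a_b_c_d_def index_mult_mat(2,3) del: index_mult_mat(1))
  finally show "?L $$ (r,s) = ?R $$ (r,s)" .
qed (use carrier in auto)

lemma karatsuba_mat:
  fixes A B C D :: "'a::field mat"
  assumes carrier: "A \<in> carrier_mat n n" "B \<in> carrier_mat n n" "C \<in> carrier_mat n n" "D \<in> carrier_mat n n"
    and root: "\<xi> * \<xi> + \<sigma> * \<xi> + \<tau> = 0"
  shows "(A + \<xi> \<cdot>\<^sub>m B) * (C + \<xi> \<cdot>\<^sub>m D) =
    (A * C + (- \<tau>) \<cdot>\<^sub>m (B * D)) + \<xi> \<cdot>\<^sub>m ((A + B) * (C + D) + (- 1) \<cdot>\<^sub>m (A * C) + (- 1 - \<sigma>) \<cdot>\<^sub>m (B * D))"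
proof -
  have "(A + B) * (C + D) = A * C + B * C + (A * D + B * D)"
    using carrier by (simp add: add_mult_distrib_mat[of _ n n] mult_add_distrib_mat[of _ n n])
  then have "(A + B) * (C + D) + (- 1) \<cdot>\<^sub>m (A * C) + (- 1 - \<sigma>) \<cdot>\<^sub>m (B * D) = A * D + B * C + (- \<sigma>) \<cdot>\<^sub>m (B * D)"
    using carrier by (intro eq_matI) (auto simp: algebra_simps)
  then show ?thesis using quadratic_mult_mat[OF carrier root] by simp
qed

lemma quadratic_inverse_mat:
  fixes A B Ai C :: "'a::field mat"
  assumes carrier: "A \<in> carrier_mat n n" "B \<in> carrier_mat n n" "Ai \<in> carrier_mat n n" "C \<in> carrier_mat n n"
    and root: "\<xi> * \<xi> + \<sigma> * \<xi> + \<tau> = 0"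
    and Ai: "(A + (- \<sigma>) \<cdot>\<^sub>m B) * Ai = 1\<^sub>m n"
    and C: "(A + \<tau> \<cdot>\<^sub>m (B * (Ai * B))) * C = 1\<^sub>m n"
  shows "(A + \<xi> \<cdot>\<^sub>m B) * (C + \<xi> \<cdot>\<^sub>m ((- 1) \<cdot>\<^sub>m (Ai * B * C))) = 1\<^sub>m n"
proof -
  define P where "P = Ai * B * C"
  have P: "P \<in> carrier_mat n n" using carrier by (simp add: P_def)
  have "B * P = B * (Ai * B) * C" using carrier by (simp add: P_def assoc_mult_mat[of _ n n _ n _ n])
  then have "A * C + \<tau> \<cdot>\<^sub>m (B * P) = (A + \<tau> \<cdot>\<^sub>m (B * (Ai * B))) * C"
    using carrier by (simp add: add_mult_distrib_mat[of _ n n] mult_smult_assoc_mat[of _ n n])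
  with C have AC: "A * C + \<tau> \<cdot>\<^sub>m (B * P) = 1\<^sub>m n" by simp
  have "(A + (- \<sigma>) \<cdot>\<^sub>m B) * P = ((A + (- \<sigma>) \<cdot>\<^sub>m B) * Ai) * B * C"
    using carrier by (simp add: P_def assoc_mult_mat[of _ n n _ n _ n])
  then have AP: "A * P + (- \<sigma>) \<cdot>\<^sub>m (B * P) = B * C"
    using Ai carrier P by (simp add: add_mult_distrib_mat mult_smult_assoc_mat)
  have "A * C + (- \<tau>) \<cdot>\<^sub>m (B * ((- 1) \<cdot>\<^sub>m P)) = A * C + \<tau> \<cdot>\<^sub>m (B * P)"
    using carrier P by (intro eq_matI) (simp_all add: mult_smult_distrib[of _ n n])
  moreover have "A * ((- 1) \<cdot>\<^sub>m P) + B * C + (- \<sigma>) \<cdot>\<^sub>m (B * ((- 1) \<cdot>\<^sub>m P)) =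
      B * C + (- 1) \<cdot>\<^sub>m (A * P + (- \<sigma>) \<cdot>\<^sub>m (B * P))"
    using carrier P by (intro eq_matI) (simp_all add: mult_smult_distrib[of _ n n] algebra_simps)
  ultimately have "(A + \<xi> \<cdot>\<^sub>m B) * (C + \<xi> \<cdot>\<^sub>m ((- 1) \<cdot>\<^sub>m P)) =
      1\<^sub>m n + \<xi> \<cdot>\<^sub>m (B * C + (- 1) \<cdot>\<^sub>m (B * C))"
    using quadratic_mult_mat[OF carrier(1,2,4) _ root, of "(- 1) \<cdot>\<^sub>m P"] P AC AP by simp
  also have "\<dots> = 1\<^sub>m n" using carrier by (intro eq_matI) auto
  finally show ?thesis by (simp add: P_def)
qed

fun lincomb :: "nat \<Rightarrow> ('a::field \<times> 'a mat) list \<Rightarrow> 'a mat" where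
  "lincomb n [] = 0\<^sub>m n n"
| "lincomb n ((c, X) # cXs) = c \<cdot>\<^sub>m X + lincomb n cXs"

lemma lincomb_carrier[simp]: "lincomb n cXs \<in> carrier_mat n n"
  by (induction cXs rule: lincomb.induct) auto

section \<open>Straight-line programs\<close>

lemma run_append: "run n (p @ q) vs = (case run n p vs of None \<Rightarrow> None | Some vs' \<Rightarrow> run n q vs')"
  by (induction p arbitrary: vs) (auto split: option.splits)

lemma run_snoc:
  "run n (p @ [ins]) vs = (case run n p vs of None \<Rightarrow> None | Some vs' \<Rightarrow>
     map_option (\<lambda>v. vs' @ [v]) (exec_instr n vs' ins))"
  by (simp add: run_append split: option.splits)

lemma run_extends: "run n p vs = Some vs' \<Longrightarrow> \<exists>ws. vs' = vs @ ws \<and> length ws = length p"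
proof (induction p arbitrary: vs)
  case (Cons ins p)
  then show ?case by (fastforce split: option.splits)
qed simp

lemma count_mul_append[simp]: "count_mul (p @ q) = count_mul p + count_mul q"
  by (simp add: count_mul_def)

lemma count_inv_append[simp]: "count_inv (p @ q) = count_inv p + count_inv q"
  by (simp add: count_inv_def)

lemma count_map_Lin[simp]: "count_mul (map Lin css) = 0" "count_inv (map Lin css) = 0"
  by (simp_all add: count_mul_def count_inv_def filter_empty_conv)

lemma prog_over_append[simp]: "prog_over F (p @ q) \<longleftrightarrow> prog_over F p \<and> prog_over F q"
  by (auto simp: prog_over_def)

lemma exec_instr_Inv:
  assumes "i < length vs" "vs ! i \<in> carrier_mat n n" "B \<in> carrier_mat n n"
    and "vs ! i * B = 1\<^sub>m n" "B * vs ! i = 1\<^sub>m n"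
  shows "exec_instr n vs (Inv i) = Some B"
proof -
  let ?P = "\<lambda>B. B \<in> carrier_mat n n \<and> vs ! i * B = 1\<^sub>m n \<and> B * vs ! i = 1\<^sub>m n"
  have "?P (SOME B. ?P B)" by (rule someI[of ?P B]) (use assms in auto)
  then have "(SOME B. ?P B) = B" using assms by (blast intro: mat_inverse_unique)
  then show ?thesis using assms by auto
qed

lemma exec_instr_Inv_singular:
  assumes "vs ! i \<in> carrier_mat n n" "det (vs ! i) = 0"
  shows "exec_instr n vs (Inv i) = None"
proof -
  have "vs ! i * B \<noteq> 1\<^sub>m n" if "B \<in> carrier_mat n n" for B
    using det_mult[OF assms(1) that] assms(2) det_one by force
  then show ?thesis by auto
qed

definition lin_value :: "nat \<Rightarrow> 'a::field mat list \<Rightarrow> ('a \<times> nat) list \<Rightarrow> 'a mat" where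
  "lin_value n vs cs = mat n n (\<lambda>(r,s). \<Sum>c\<leftarrow>cs. fst c * (vs ! snd c) $$ (r,s))"

lemma lin_value_Nil: "lin_value n vs [] = 0\<^sub>m n n"
  by (rule eq_matI) (auto simp: lin_value_def)

lemma lin_value_append_values:
  "\<forall>c\<in>set cs. snd c < length vs \<Longrightarrow> lin_value n (vs @ ws) cs = lin_value n vs cs"
  unfolding lin_value_def
  by (rule eq_matI) (auto simp: nth_append intro!: arg_cong[where f=sum_list] map_cong)

lemma lin_value_append_coeffs: "lin_value n vs (cs @ ds) = lin_value n vs cs + lin_value n vs ds"
  by (rule eq_matI) (auto simp: lin_value_def)

lemma run_map_Lin:
  "\<forall>cs\<in>set css. \<forall>c\<in>set cs. snd c < length vs \<Longrightarrow>
   run n (map Lin css) vs = Some (vs @ map (lin_value n vs) css)"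
proof (induction css arbitrary: vs)
  case (Cons cs css)
  have "run n (map Lin (cs # css)) vs = run n (map Lin css) (vs @ [lin_value n vs cs])"
    using Cons.prems by (simp add: lin_value_def)
  also have "\<dots> = Some ((vs @ [lin_value n vs cs]) @ map (lin_value n (vs @ [lin_value n vs cs])) css)"
    by (rule Cons.IH) (use Cons.prems in \<open>fastforce intro: less_SucI\<close>)
  also have "map (lin_value n (vs @ [lin_value n vs cs])) css = map (lin_value n vs) css"
    using Cons.prems by (auto intro!: map_cong lin_value_append_values)
  finally show ?case by simp
qed simp

definition run_rational ::
  "'a::field set \<Rightarrow> nat \<Rightarrow> nat \<Rightarrow> 'a instr list \<Rightarrow> ('a mat list \<Rightarrow> 'a) \<Rightarrow>
   (nat \<Rightarrow> nat \<Rightarrow> nat \<Rightarrow> 'a mat list \<Rightarrow> 'a) \<Rightarrow> bool" where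
  "run_rational F N n p g Q \<longleftrightarrow> g \<in> polyfun F N n \<and> (\<forall>i r s. Q i r s \<in> polyfun F N n) \<and>
     (\<forall>x\<in>coord_space F N n. (run n p x \<noteq> None \<longleftrightarrow> g x \<noteq> 0) \<and>
        (\<forall>vs. run n p x = Some vs \<longrightarrow> (\<forall>i<length vs. vs ! i \<in> carrier_mat n n \<and>
           (\<forall>r<n. \<forall>s<n. (vs ! i) $$ (r,s) = Q i r s x / g x))))"

definition rational_step ::
  "'a::field set \<Rightarrow> nat \<Rightarrow> nat \<Rightarrow> 'a instr list \<Rightarrow> ('a mat list \<Rightarrow> 'a) \<Rightarrow> 'a instr \<Rightarrow>
   ('a mat list \<Rightarrow> 'a) \<Rightarrow> (nat \<Rightarrow> nat \<Rightarrow> 'a mat list \<Rightarrow> 'a) \<Rightarrow> bool" where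
  "rational_step F N n p g ins h P \<longleftrightarrow> h \<in> polyfun F N n \<and> (\<forall>r s. P r s \<in> polyfun F N n) \<and>
     (\<forall>x\<in>coord_space F N n. \<forall>vs. run n p x = Some vs \<longrightarrow>
        (exec_instr n vs ins \<noteq> None \<longleftrightarrow> h x \<noteq> 0) \<and>
        (\<forall>v. exec_instr n vs ins = Some v \<longrightarrow> v \<in> carrier_mat n n \<and>
           (\<forall>r<n. \<forall>s<n. v $$ (r,s) = P r s x / (g x * h x))))"

lemma run_length_coord_space:
  "x \<in> coord_space F N n \<Longrightarrow> run n p x = Some vs \<Longrightarrow> length vs = N + length p"
  using run_extends by (fastforce simp: coord_space_def)

lemma run_rational_Nil:
  assumes "is_subfield F"
  shows "run_rational F N n [] (\<lambda>_. 1)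
     (\<lambda>i r s. if i < N \<and> r < n \<and> s < n then (\<lambda>x. (x ! i) $$ (r,s)) else (\<lambda>_. 0))"
  using assms by (auto simp: run_rational_def coord_space_def intro: pf_var pf_const subfield_0 subfield_1)

lemma run_rational_snoc:
  assumes rep: "run_rational F N n p g Q" and step: "rational_step F N n p g ins h P"
  shows "run_rational F N n (p @ [ins]) (\<lambda>x. g x * h x)
     (\<lambda>i r s. if i = N + length p then P r s else (\<lambda>x. Q i r s x * h x))"
    (is "run_rational F N n _ _ ?Q")
proof -
  have polys: "(\<lambda>x. g x * h x) \<in> polyfun F N n" "\<forall>i r s. ?Q i r s \<in> polyfun F N n"
    using rep step by (auto simp: run_rational_def rational_step_def intro: pf_mul)
  have "(run n (p @ [ins]) x \<noteq> None \<longleftrightarrow> g x * h x \<noteq> 0) \<and>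
    (\<forall>vs. run n (p @ [ins]) x = Some vs \<longrightarrow> (\<forall>i<length vs. vs ! i \<in> carrier_mat n n \<and>
       (\<forall>r<n. \<forall>s<n. (vs ! i) $$ (r,s) = ?Q i r s x / (g x * h x))))"
    if x: "x \<in> coord_space F N n" for x
  proof (cases "run n p x")
    case None
    then have "g x = 0" using rep x by (auto simp: run_rational_def)
    then show ?thesis using None by (simp add: run_snoc)
  next
    case (Some vs)
    have len: "length vs = N + length p" using run_length_coord_space[OF x Some] .
    have g: "g x \<noteq> 0" and vs: "\<forall>i<length vs. vs ! i \<in> carrier_mat n n \<and>
        (\<forall>r<n. \<forall>s<n. (vs ! i) $$ (r,s) = Q i r s x / g x)"
      using rep x Some by (auto simp: run_rational_def)
    have ins: "(exec_instr n vs ins \<noteq> None \<longleftrightarrow> h x \<noteq> 0) \<and>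
        (\<forall>v. exec_instr n vs ins = Some v \<longrightarrow> v \<in> carrier_mat n n \<and>
           (\<forall>r<n. \<forall>s<n. v $$ (r,s) = P r s x / (g x * h x)))"
      using step x Some by (auto simp: rational_step_def)
    show ?thesis
    proof (cases "exec_instr n vs ins")
      case None
      then show ?thesis using ins by (simp add: run_snoc Some)
    next
      case v: (Some v)
      then have "h x \<noteq> 0" using ins by auto
      then show ?thesis using ins vs g len v
        by (auto simp: run_snoc Some v nth_append less_Suc_eq)
    qed
  qed
  then show ?thesis using polys unfolding run_rational_def by blast
qed

lemma run_rationalD:
  assumes "run_rational F N n p g Q" "x \<in> coord_space F N n" "run n p x = Some vs"
  shows "g x \<noteq> 0" "length vs = N + length p"
    "\<And>i. i < length vs \<Longrightarrow> vs ! i \<in> carrier_mat n n"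
    "\<And>i r s. i < length vs \<Longrightarrow> r < n \<Longrightarrow> s < n \<Longrightarrow> (vs ! i) $$ (r,s) = Q i r s x / g x"
  using assms run_length_coord_space[OF assms(2,3)] by (auto simp: run_rational_def)

lemma rational_stepI:
  assumes "h \<in> polyfun F N n" "\<And>r s. P r s \<in> polyfun F N n"
    and "\<And>x vs. x \<in> coord_space F N n \<Longrightarrow> run n p x = Some vs \<Longrightarrow>
      exec_instr n vs ins \<noteq> None \<longleftrightarrow> h x \<noteq> 0"
    and "\<And>x vs v. x \<in> coord_space F N n \<Longrightarrow> run n p x = Some vs \<Longrightarrow>
      exec_instr n vs ins = Some v \<Longrightarrow> v \<in> carrier_mat n n"
    and "\<And>x vs v r s. x \<in> coord_space F N n \<Longrightarrow> run n p x = Some vs \<Longrightarrow>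
      exec_instr n vs ins = Some v \<Longrightarrow> r < n \<Longrightarrow> s < n \<Longrightarrow> v $$ (r,s) = P r s x / (g x * h x)"
  shows "rational_step F N n p g ins h P"
  using assms by (auto simp: rational_step_def)

lemma rational_step_fail:
  assumes "is_subfield F" "\<And>x vs. x \<in> coord_space F N n \<Longrightarrow> run n p x = Some vs \<Longrightarrow> exec_instr n vs ins = None"
  shows "rational_step F N n p g ins (\<lambda>_. 0) (\<lambda>_ _ _. 0)"
  using assms by (auto simp: rational_step_def intro: pf_const subfield_0)

lemma rational_step_Lin:
  assumes F: "is_subfield F" and rep: "run_rational F N n p g Q"
    and cs: "\<forall>c\<in>set cs. fst c \<in> F \<and> snd c < N + length p"
  shows "rational_step F N n p g (Lin cs) (\<lambda>_. 1) (\<lambda>r s x. \<Sum>c\<leftarrow>cs. fst c * Q (snd c) r s x)"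
proof (rule rational_stepI)
  show "(\<lambda>_. 1) \<in> polyfun F N n" by (intro pf_const subfield_1 F)
  show "(\<lambda>x. \<Sum>c\<leftarrow>cs. fst c * Q (snd c) r s x) \<in> polyfun F N n" for r s
    using rep cs by (auto simp: run_rational_def intro!: polyfun_sum_list[OF F] polyfun_scale)
  fix x vs assume x: "x \<in> coord_space F N n" and run: "run n p x = Some vs"
  note vs = run_rationalD[OF rep x run]
  show "exec_instr n vs (Lin cs) \<noteq> None \<longleftrightarrow> (1::'a) \<noteq> 0" using cs vs(2) by auto
  fix v assume v: "exec_instr n vs (Lin cs) = Some v"
  then show "v \<in> carrier_mat n n" by (auto split: if_splits)
  fix r s assume "r < n" "s < n"
  then have "(\<Sum>c\<leftarrow>cs. fst c * (vs ! snd c) $$ (r,s)) = (\<Sum>c\<leftarrow>cs. fst c * Q (snd c) r s x) / (g x * 1)"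
    using cs vs by (induction cs) (auto simp: add_divide_distrib)
  then show "v $$ (r,s) = (\<Sum>c\<leftarrow>cs. fst c * Q (snd c) r s x) / (g x * 1)"
    using v \<open>r < n\<close> \<open>s < n\<close> by (auto split: if_splits)
qed

lemma rational_step_Const:
  assumes F: "is_subfield F" and rep: "run_rational F N n p g Q" and c: "c \<in> F"
  shows "rational_step F N n p g (Const c) (\<lambda>_. 1) (\<lambda>r s x. (if r = s then c else 0) * g x)"
proof (rule rational_stepI)
  show "(\<lambda>_. 1) \<in> polyfun F N n" by (intro pf_const subfield_1 F)
  show "(\<lambda>x. (if r = s then c else 0) * g x) \<in> polyfun F N n" for r s
    using rep c by (auto simp: run_rational_def intro!: pf_mul pf_const subfield_0 F)
  fix x vs v r s assume x: "x \<in> coord_space F N n" and run: "run n p x = Some vs"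
    and "exec_instr n vs (Const c) = Some v" "r < n" "s < n"
  then show "v $$ (r,s) = (if r = s then c else 0) * g x / (g x * 1)"
    using run_rationalD(1)[OF rep x run] by auto
qed auto

lemma rational_step_Mul:
  assumes F: "is_subfield F" and rep: "run_rational F N n p g Q"
    and ij: "i < N + length p" "j < N + length p"
  shows "rational_step F N n p g (Mul i j) g (\<lambda>r s x. \<Sum>t\<in>{0..<n}. Q i r t x * Q j t s x)"
proof (rule rational_stepI)
  show "g \<in> polyfun F N n" using rep by (simp add: run_rational_def)
  show "(\<lambda>x. \<Sum>t\<in>{0..<n}. Q i r t x * Q j t s x) \<in> polyfun F N n" for r s
    using rep by (auto simp: run_rational_def intro!: polyfun_sum[OF F] pf_mul)
  fix x vs assume x: "x \<in> coord_space F N n" and run: "run n p x = Some vs"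
  note vs = run_rationalD[OF rep x run]
  have dims: "dim_row (vs ! i) = n" "dim_col (vs ! i) = n" "dim_row (vs ! j) = n" "dim_col (vs ! j) = n"
    using ij vs(2,3) by auto
  show "exec_instr n vs (Mul i j) \<noteq> None \<longleftrightarrow> g x \<noteq> 0" using ij vs(1,2) by auto
  fix v assume v: "exec_instr n vs (Mul i j) = Some v"
  then show "v \<in> carrier_mat n n" using ij vs(2) dims by (auto split: if_splits)
  fix r s assume rs: "r < n" "s < n"
  have "(vs ! i * vs ! j) $$ (r,s) = (\<Sum>t\<in>{0..<n}. (vs ! i) $$ (r,t) * (vs ! j) $$ (t,s))"
    using rs dims by (simp add: scalar_prod_def)
  also have "\<dots> = (\<Sum>t\<in>{0..<n}. Q i r t x * Q j t s x / (g x * g x))"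
    using ij vs rs by (intro sum.cong) auto
  finally show "v $$ (r,s) = (\<Sum>t\<in>{0..<n}. Q i r t x * Q j t s x) / (g x * g x)"
    using v ij vs(2) by (simp add: sum_divide_distrib split: if_splits)
qed

lemma rational_step_Inv:
  assumes F: "is_subfield F" and rep: "run_rational F N n p g Q" and i: "i < N + length p"
  shows "rational_step F N n p g (Inv i) (\<lambda>x. det (mat n n (\<lambda>(r,s). Q i r s x)))
     (\<lambda>r s x. g x * g x * cofactor (mat n n (\<lambda>(r,s). Q i r s x)) s r)"
proof (rule rational_stepI)
  have Q: "\<And>r s. Q i r s \<in> polyfun F N n" using rep by (simp add: run_rational_def)
  show "(\<lambda>x. det (mat n n (\<lambda>(r,s). Q i r s x))) \<in> polyfun F N n"
    by (rule polyfun_det[OF F]) (auto simp: Q)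
  show "(\<lambda>x. g x * g x * cofactor (mat n n (\<lambda>(r,s). Q i r s x)) s r) \<in> polyfun F N n" for r s
    using rep by (auto simp: run_rational_def Q intro!: pf_mul polyfun_cofactor[OF F])
  fix x vs assume x: "x \<in> coord_space F N n" and run: "run n p x = Some vs"
  note vs = run_rationalD[OF rep x run]
  define M where "M = mat n n (\<lambda>(r,s). Q i r s x)"
  have M: "M \<in> carrier_mat n n" by (simp add: M_def)
  have vsi: "vs ! i = (1 / g x) \<cdot>\<^sub>m M"
    using i vs by (intro eq_matI) (auto simp: M_def)
  have singular: "exec_instr n vs (Inv i) = None" if "det M = 0"
    by (rule exec_instr_Inv_singular) (use i vs M that in \<open>auto simp: vsi det_smult\<close>)
  have regular: "exec_instr n vs (Inv i) = Some ((g x / det M) \<cdot>\<^sub>m adj_mat M)" if d: "det M \<noteq> 0"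
  proof (rule exec_instr_Inv)
    show "vs ! i * ((g x / det M) \<cdot>\<^sub>m adj_mat M) = 1\<^sub>m n"
      unfolding vsi by (rule smult_inverse_pair[OF M adj_mat(1,2)[OF M]]) (use d vs(1) in simp)
    show "(g x / det M) \<cdot>\<^sub>m adj_mat M * vs ! i = 1\<^sub>m n"
      unfolding vsi by (rule smult_inverse_pair[OF adj_mat(1)[OF M] M adj_mat(3)[OF M]]) (use d vs(1) in simp)
  qed (use i vs adj_mat(1)[OF M] in auto)
  show "exec_instr n vs (Inv i) \<noteq> None \<longleftrightarrow> det (mat n n (\<lambda>(r,s). Q i r s x)) \<noteq> 0"
    unfolding M_def[symmetric] using singular regular by (metis option.distinct(1))
  fix v assume v: "exec_instr n vs (Inv i) = Some v"
  then have d: "det M \<noteq> 0" and v: "v = (g x / det M) \<cdot>\<^sub>m adj_mat M"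
    using singular regular by fastforce+
  then show "v \<in> carrier_mat n n" using adj_mat(1)[OF M] by simp
  fix r s assume "r < n" "s < n"
  then show "v $$ (r,s) = g x * g x * cofactor (mat n n (\<lambda>(r,s). Q i r s x)) s r /
      (g x * det (mat n n (\<lambda>(r,s). Q i r s x)))"
    using v d vs(1) M by (simp add: adj_mat_def M_def[symmetric])
qed

lemma rational_step_exists:
  assumes F: "is_subfield F" and rep: "run_rational F N n p g Q" and ins: "instr_over F ins"
  shows "\<exists>h P. rational_step F N n p g ins h P"
proof -
  have fail: "\<exists>h P. rational_step F N n p g ins h P"
    if "\<And>x vs. x \<in> coord_space F N n \<Longrightarrow> run n p x = Some vs \<Longrightarrow> exec_instr n vs ins = None"
    using rational_step_fail[OF F, of N n p ins g] that by blast
  have len: "\<And>x vs. x \<in> coord_space F N n \<Longrightarrow> run n p x = Some vs \<Longrightarrow> length vs = N + length p"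
    by (rule run_length_coord_space)
  show ?thesis
  proof (cases ins)
    case (Lin cs)
    show ?thesis
    proof (cases "\<forall>c\<in>set cs. snd c < N + length p")
      case True
      then show ?thesis using rational_step_Lin[OF F rep, of cs] ins Lin by auto
    next
      case False
      then obtain c where c: "c \<in> set cs" "\<not> snd c < N + length p" by blast
      show ?thesis by (rule fail) (use c len in \<open>force simp: Lin\<close>)
    qed
  next
    case (Const c)
    then show ?thesis using rational_step_Const[OF F rep] ins by auto
  next
    case (Mul i j)
    show ?thesis
    proof (cases "i < N + length p \<and> j < N + length p")
      case True
      then show ?thesis using rational_step_Mul[OF F rep] Mul by blast
    next
      case False
      then show ?thesis by (intro fail) (auto simp: Mul dest: len)
    qed
  next
    case (Inv i)
    show ?thesis
    proof (cases "i < N + length p")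
      case True
      then show ?thesis using rational_step_Inv[OF F rep] Inv by blast
    next
      case False
      then show ?thesis by (intro fail) (auto simp: Inv dest: len)
    qed
  qed
qed

lemma run_rational_exists:
  assumes F: "is_subfield F" and "prog_over F p"
  shows "\<exists>g Q. run_rational F N n p g Q"
  using assms(2)
proof (induction p rule: rev_induct)
  case Nil
  show ?case using run_rational_Nil[OF F] by blast
next
  case (snoc ins p)
  then obtain g Q where rep: "run_rational F N n p g Q" by (auto simp: prog_over_def)
  have "instr_over F ins" using snoc.prems by (simp add: prog_over_def)
  then obtain h P where "rational_step F N n p g ins h P"
    using rational_step_exists[OF F rep] by blast
  then show ?case using run_rational_snoc[OF rep] by blast
qed

lemma generic_run_success:
  assumes F: "is_subfield F" and p: "prog_over F p"
    and x0: "x0 \<in> coord_space F N n" "run n p x0 \<noteq> None"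
    and P: "\<And>x vs. x \<in> coord_space F N n \<Longrightarrow> run n p x = Some vs \<Longrightarrow> P x vs"
  shows "generic F N n (\<lambda>x. \<exists>vs. run n p x = Some vs \<and> P x vs)"
proof -
  obtain g Q where rep: "run_rational F N n p g Q" using run_rational_exists[OF F p] by blast
  let ?Z = "{x \<in> coord_space F N n. g x = 0}"
  have "zariski_closed F N n ?Z"
    unfolding zariski_closed_def using rep by (intro exI[of _ "{g}"]) (auto simp: run_rational_def)
  moreover have "?Z \<noteq> coord_space F N n" using rep x0 by (auto simp: run_rational_def)
  moreover have "\<exists>vs. run n p x = Some vs \<and> P x vs" if "x \<in> coord_space F N n - ?Z" for x
    using rep that P by (auto simp: run_rational_def)
  ultimately show ?thesis unfolding generic_def by blast
qed

definition mats_over :: "'a::field set \<Rightarrow> nat \<Rightarrow> 'a mat list \<Rightarrow> bool" where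
  "mats_over F n vs \<longleftrightarrow> (\<forall>v\<in>set vs. v \<in> carrier_mat n n \<and> (\<forall>r<n. \<forall>s<n. v $$ (r,s) \<in> F))"

lemma mats_over_append[simp]: "mats_over F n (vs @ ws) \<longleftrightarrow> mats_over F n vs \<and> mats_over F n ws"
  by (auto simp: mats_over_def)

lemma mats_over_nth:
  "mats_over F n vs \<Longrightarrow> i < length vs \<Longrightarrow> vs ! i \<in> carrier_mat n n \<and> (\<forall>r<n. \<forall>s<n. (vs ! i) $$ (r,s) \<in> F)"
  by (auto simp: mats_over_def)

lemma mats_over_map_nth:
  assumes "mats_over F n vs" "set idx \<subseteq> {..<length vs}"
  shows "mats_over F n (map ((!) vs) idx)"
  unfolding mats_over_def
proof
  fix v assume "v \<in> set (map ((!) vs) idx)"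
  then obtain i where "i \<in> set idx" "v = vs ! i" by auto
  then show "v \<in> carrier_mat n n \<and> (\<forall>r<n. \<forall>s<n. v $$ (r,s) \<in> F)"
    using assms by (auto simp: mats_over_def)
qed

lemma mats_over_lin_value:
  assumes F: "is_subfield F" and vs: "mats_over F n vs" and cs: "\<forall>c\<in>set cs. fst c \<in> F \<and> snd c < length vs"
  shows "mats_over F n [lin_value n vs cs]"
  using cs mats_over_nth[OF vs]
  by (auto simp: mats_over_def lin_value_def intro!: subfield_sum_list[OF F] subfield_mult[OF F])

lemma mats_over_mult:
  assumes F: "is_subfield F" and "mats_over F n [A]" "mats_over F n [B]"
  shows "mats_over F n [A * B]"
  using assms(2,3) by (auto simp: mats_over_def scalar_prod_def intro!: subfield_sum[OF F] subfield_mult[OF F])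

lemma coord_space_iff: "x \<in> coord_space F N n \<longleftrightarrow> length x = N \<and> mats_over F n x"
  by (auto simp: coord_space_def mats_over_def)

lemma sum_lessThan_add: "(\<Sum>i<(a::nat) + b. f i) = (\<Sum>i<a. f i) + (\<Sum>i<b. f (a + i))"
  by (induction b) (simp_all add: add.assoc)

lemma assemble_index[simp]:
  "r < n \<Longrightarrow> s < n \<Longrightarrow> assemble n b Xs $$ (r,s) = (\<Sum>i<length Xs. b i * (Xs ! i) $$ (r,s))"
  by (simp add: assemble_def)

lemma assemble_carrier[simp]: "assemble n b Xs \<in> carrier_mat n n"
  and assemble_dim[simp]: "dim_row (assemble n b Xs) = n" "dim_col (assemble n b Xs) = n"
  by (simp_all add: assemble_def)

lemma assemble_map_add:
  assumes "\<And>i. i < N \<Longrightarrow> f i \<in> carrier_mat n n" "\<And>i. i < N \<Longrightarrow> g i \<in> carrier_mat n n"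
  shows "assemble n b (map (\<lambda>i. f i + g i) [0..<N]) = assemble n b (map f [0..<N]) + assemble n b (map g [0..<N])"
proof (rule eq_matI)
  fix r s assume "r < dim_row (assemble n b (map f [0..<N]) + assemble n b (map g [0..<N]))"
    "s < dim_col (assemble n b (map f [0..<N]) + assemble n b (map g [0..<N]))"
  then have rs: "r < n" "s < n" by auto
  have "(f i + g i) $$ (r,s) = f i $$ (r,s) + g i $$ (r,s)" if "i < N" for i
    using carrier_matD[OF assms(2)[OF that]] rs by simp
  then show "assemble n b (map (\<lambda>i. f i + g i) [0..<N]) $$ (r,s) =
      (assemble n b (map f [0..<N]) + assemble n b (map g [0..<N])) $$ (r,s)"
    using rs by (simp add: sum.distrib distrib_left)
qed auto

lemma assemble_map_zero: "assemble n b (map (\<lambda>_. 0\<^sub>m n n) [0..<N]) = 0\<^sub>m n n"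
  by (rule eq_matI) auto

lemma assemble_scaled_basis: "assemble n (\<lambda>i. c * b i) Xs = c \<cdot>\<^sub>m assemble n b Xs"
  by (rule eq_matI) (auto simp: sum_distrib_left mult.assoc)

lemma assemble_change_of_basis:
  assumes "\<And>l. l < length xs \<Longrightarrow> u l = (\<Sum>i<N. M l i * w i)"
  shows "assemble n w (map (\<lambda>i. lin_value n vs (map (\<lambda>l. (M l i, xs ! l)) [0..<length xs])) [0..<N])
       = assemble n u (map ((!) vs) xs)"
proof (rule eq_matI)
  fix r s assume "r < dim_row (assemble n u (map ((!) vs) xs))" "s < dim_col (assemble n u (map ((!) vs) xs))"
  then have rs: "r < n" "s < n" by auto
  have "(\<Sum>i<N. w i * (\<Sum>l<length xs. M l i * (vs ! (xs ! l)) $$ (r,s))) =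
        (\<Sum>l<length xs. \<Sum>i<N. M l i * w i * (vs ! (xs ! l)) $$ (r,s))"
    by (subst sum.swap) (simp add: sum_distrib_left ac_simps)
  also have "\<dots> = (\<Sum>l<length xs. u l * (vs ! (xs ! l)) $$ (r,s))"
    by (simp add: assms sum_distrib_right)
  finally show "assemble n w (map (\<lambda>i. lin_value n vs (map (\<lambda>l. (M l i, xs ! l)) [0..<length xs])) [0..<N]) $$ (r,s)
      = assemble n u (map ((!) vs) xs) $$ (r,s)"
    using rs by (simp add: lin_value_def sum_list_sum_nth atLeast0LessThan)
qed auto

definition basis_change_prog :: "(nat \<Rightarrow> nat \<Rightarrow> 'a) \<Rightarrow> nat list \<Rightarrow> nat \<Rightarrow> 'a instr list" where
  "basis_change_prog M xs N = map Lin (map (\<lambda>i. map (\<lambda>l. (M l i, xs ! l)) [0..<length xs]) [0..<N])"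

lemma length_basis_change_prog[simp]: "length (basis_change_prog M xs N) = N"
  and count_basis_change_prog[simp]:
    "count_mul (basis_change_prog M xs N) = 0" "count_inv (basis_change_prog M xs N) = 0"
  by (simp_all add: basis_change_prog_def del: map_map)

lemma prog_over_basis_change_prog:
  "(\<And>l i. l < length xs \<Longrightarrow> i < N \<Longrightarrow> M l i \<in> F) \<Longrightarrow> prog_over F (basis_change_prog M xs N)"
  by (auto simp: basis_change_prog_def prog_over_def)

lemma run_basis_change_prog:
  assumes F: "is_subfield F" and vs: "mats_over F n vs" and xs: "set xs \<subseteq> {..<length vs}"
    and M: "\<And>l i. l < length xs \<Longrightarrow> i < N \<Longrightarrow> M l i \<in> F"
    and uw: "\<And>l. l < length xs \<Longrightarrow> u l = (\<Sum>i<N. M l i * w i)"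
  shows "\<exists>ws. run n (basis_change_prog M xs N) vs = Some (vs @ ws) \<and> mats_over F n ws \<and> length ws = N \<and>
    assemble n w ws = assemble n u (map ((!) vs) xs)"
proof (intro exI conjI)
  let ?ws = "map (\<lambda>i. lin_value n vs (map (\<lambda>l. (M l i, xs ! l)) [0..<length xs])) [0..<N]"
  have coeffs: "\<forall>c\<in>set (map (\<lambda>l. (M l i, xs ! l)) [0..<length xs]). fst c \<in> F \<and> snd c < length vs"
    if "i < N" for i
    using that M xs nth_mem by fastforce
  show "run n (basis_change_prog M xs N) vs = Some (vs @ ?ws)"
    unfolding basis_change_prog_def using coeffs by (subst run_map_Lin) auto
  show "mats_over F n ?ws"
    using mats_over_lin_value[OF F vs coeffs] by (auto simp: mats_over_def)
  show "length ?ws = N" by simp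
  show "assemble n w ?ws = assemble n u (map ((!) vs) xs)"
    by (rule assemble_change_of_basis) (rule uw)
qed

lemma is_basis_over_span:
  assumes "is_basis_over F E b N" "x \<in> E"
  shows "\<exists>c. (\<forall>i<N. c i \<in> F) \<and> x = (\<Sum>i<N. c i * b i)"
proof -
  have "\<forall>x\<in>E. \<exists>!c. (\<forall>i<N. c i \<in> F) \<and> (\<forall>i\<ge>N. c i = 0) \<and> x = (\<Sum>i<N. c i * b i)"
    using assms(1) unfolding is_basis_over_def by (rule conjunct2)
  then show ?thesis using assms(2) by (auto dest!: bspec ex1_implies_ex)
qed

lemma coords_of_one:
  assumes F: "is_subfield F" and b: "is_basis_over F E b N" and one: "1 \<in> E"
  shows "\<exists>x0\<in>coord_space F N n. assemble n b x0 = 1\<^sub>m n"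
proof -
  obtain c where c: "\<forall>l<N. c l \<in> F" "1 = (\<Sum>l<N. c l * b l)" using is_basis_over_span[OF b one] by blast
  define x0 where "x0 = map (\<lambda>l. c l \<cdot>\<^sub>m 1\<^sub>m n) [0..<N]"
  have "x0 \<in> coord_space F N n"
    using c(1) subfield_0[OF F] by (auto simp: coord_space_def x0_def)
  moreover have "assemble n b x0 = 1\<^sub>m n"
  proof (rule eq_matI)
    fix r s assume "r < dim_row (1\<^sub>m n :: 'a mat)" "s < dim_col (1\<^sub>m n :: 'a mat)"
    then have rs: "r < n" "s < n" by auto
    have "assemble n b x0 $$ (r,s) = (\<Sum>l<N. c l * b l) * (if r = s then 1 else 0)"
      using rs by (simp add: x0_def sum_distrib_right ac_simps)
    then show "assemble n b x0 $$ (r,s) = 1\<^sub>m n $$ (r,s)" using c(2) rs by simp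
  qed auto
  ultimately show ?thesis by blast
qed

section \<open>Towers of quadratic extensions\<close>

lemma ext_degree_two_span:
  assumes F: "is_subfield F" and E: "is_subfield E" and d: "ext_degree_eq F E 2"
  shows "\<exists>\<xi>\<in>E. \<forall>x\<in>E. \<exists>a c. a \<in> F \<and> c \<in> F \<and> x = a + c * \<xi>"
proof -
  obtain e where e: "is_basis_over F E e 2" using d unfolding ext_degree_eq_def by auto
  have eE: "e 0 \<in> E" "e 1 \<in> E" using e unfolding is_basis_over_def by auto
  have span: "\<exists>c0 c1. c0 \<in> F \<and> c1 \<in> F \<and> x = c0 * e 0 + c1 * e 1" if "x \<in> E" for x
    using is_basis_over_span[OF e that] by (auto simp: numeral_2_eq_2)
  obtain u0 u1 where u: "u0 \<in> F" "u1 \<in> F" "1 = u0 * e 0 + u1 * e 1"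
    using span[OF subfield_1[OF E]] by blast
  show ?thesis
  proof (cases "u1 = 0")
    case False
    then have e1: "e 1 = (1 - u0 * e 0) / u1" using u(3) by (simp add: field_simps)
    have "\<exists>a c. a \<in> F \<and> c \<in> F \<and> x = a + c * e 0" if x: "x \<in> E" for x
    proof -
      obtain c0 c1 where c: "c0 \<in> F" "c1 \<in> F" "x = c0 * e 0 + c1 * e 1" using span[OF x] by blast
      have "x = c1 / u1 + (c0 - c1 * u0 / u1) * e 0"
        unfolding c(3) e1 using False by (simp add: field_simps)
      moreover have "c1 / u1 \<in> F" "c0 - c1 * u0 / u1 \<in> F"
        using c u by (simp_all add: subfield_divide[OF F] subfield_diff[OF F] subfield_mult[OF F])
      ultimately show ?thesis by blast
    qed
    then show ?thesis using eE by blast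
  next
    case True
    then have "u0 * e 0 = 1" using u(3) by simp
    then have e0: "e 0 = 1 / u0" by (auto simp: eq_divide_eq mult.commute)
    have "\<exists>a c. a \<in> F \<and> c \<in> F \<and> x = a + c * e 1" if x: "x \<in> E" for x
    proof -
      obtain c0 c1 where c: "c0 \<in> F" "c1 \<in> F" "x = c0 * e 0 + c1 * e 1" using span[OF x] by blast
      have "x = c0 / u0 + c1 * e 1"
        unfolding c(3) e0 by simp
      moreover have "c0 / u0 \<in> F" using c u by (simp add: subfield_divide[OF F])
      ultimately show ?thesis using c by blast
    qed
    then show ?thesis using eE by blast
  qed
qed

lemma ext_degree_two_generator:
  assumes F: "is_subfield F" and E: "is_subfield E" and FE: "F \<subset> E" and d: "ext_degree_eq F E 2"
  shows "\<exists>\<xi> \<sigma> \<tau>. \<xi> \<in> E \<and> \<xi> \<notin> F \<and> \<sigma> \<in> F \<and> \<tau> \<in> F \<and> \<xi> * \<xi> + \<sigma> * \<xi> + \<tau> = 0 \<and>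
     (\<forall>x\<in>E. \<exists>a c. a \<in> F \<and> c \<in> F \<and> x = a + c * \<xi>)"
proof -
  obtain \<xi> where \<xi>: "\<xi> \<in> E" and span: "\<forall>x\<in>E. \<exists>a c. a \<in> F \<and> c \<in> F \<and> x = a + c * \<xi>"
    using ext_degree_two_span[OF F E d] by blast
  have "\<xi> \<notin> F"
  proof
    assume "\<xi> \<in> F"
    then have "E \<subseteq> F" using span by (fastforce intro: subfield_add[OF F] subfield_mult[OF F])
    then show False using FE by blast
  qed
  moreover obtain a c where "a \<in> F" "c \<in> F" "\<xi> * \<xi> = a + c * \<xi>"
    using span subfield_mult[OF E \<xi> \<xi>] by blast
  moreover have "\<xi> * \<xi> + (- c) * \<xi> + (- a) = 0" using calculation(4) by simp
  ultimately show ?thesis using \<xi> span subfield_uminus[OF F] by (intro exI[of _ \<xi>] exI[of _ "- c"] exI[of _ "- a"]) simp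
qed

locale quadratic_tower =
  fixes K :: "nat \<Rightarrow> 'a::field set" and m :: nat and \<xi> \<sigma> \<tau> :: "nat \<Rightarrow> 'a"
  assumes subfield: "j \<le> m \<Longrightarrow> is_subfield (K j)"
    and mono: "j < m \<Longrightarrow> K j \<subseteq> K (Suc j)"
    and gen_in: "j < m \<Longrightarrow> \<xi> (Suc j) \<in> K (Suc j)"
    and gen_notin: "j < m \<Longrightarrow> \<xi> (Suc j) \<notin> K j"
    and coeffs_in: "j < m \<Longrightarrow> \<sigma> (Suc j) \<in> K j" "j < m \<Longrightarrow> \<tau> (Suc j) \<in> K j"
    and gen_root: "j < m \<Longrightarrow> \<xi> (Suc j) * \<xi> (Suc j) + \<sigma> (Suc j) * \<xi> (Suc j) + \<tau> (Suc j) = 0"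
    and gen_span: "j < m \<Longrightarrow> x \<in> K (Suc j) \<Longrightarrow> \<exists>a c. a \<in> K j \<and> c \<in> K j \<and> x = a + c * \<xi> (Suc j)"

lemma quadratic_tower_exists:
  assumes subfields: "\<forall>j\<le>m. is_subfield (K j)"
    and tower: "\<forall>j\<in>{1..m}. K (j - 1) \<subseteq> K j \<and> K (j - 1) \<noteq> K j \<and> ext_degree_eq (K (j - 1)) (K j) 2"
  shows "\<exists>\<xi> \<sigma> \<tau>. quadratic_tower K m \<xi> \<sigma> \<tau>"
proof -
  define gen where "gen j x s t \<longleftrightarrow> x \<in> K j \<and> x \<notin> K (j - 1) \<and> s \<in> K (j - 1) \<and> t \<in> K (j - 1) \<and>
      x * x + s * x + t = 0 \<and> (\<forall>y\<in>K j. \<exists>a c. a \<in> K (j - 1) \<and> c \<in> K (j - 1) \<and> y = a + c * x)"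
    for j x s t
  have "\<forall>j\<in>{1..m}. \<exists>x s t. gen j x s t"
  proof
    fix j assume j: "j \<in> {1..m}"
    show "\<exists>x s t. gen j x s t"
      unfolding gen_def by (rule ext_degree_two_generator) (use subfields tower j in auto)
  qed
  then obtain \<xi> where "\<forall>j\<in>{1..m}. \<exists>s t. gen j (\<xi> j) s t" by (auto dest!: bchoice)
  then obtain \<sigma> where "\<forall>j\<in>{1..m}. \<exists>t. gen j (\<xi> j) (\<sigma> j) t" by (auto dest!: bchoice)
  then obtain \<tau> where gen: "\<forall>j\<in>{1..m}. gen j (\<xi> j) (\<sigma> j) (\<tau> j)" by (auto dest!: bchoice)
  have "quadratic_tower K m \<xi> \<sigma> \<tau>"
  proof
    fix j assume "j < m"
    then have j: "Suc j \<in> {1..m}" by simp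
    then show "K j \<subseteq> K (Suc j)" using tower by fastforce
    have "gen (Suc j) (\<xi> (Suc j)) (\<sigma> (Suc j)) (\<tau> (Suc j))" using gen j by blast
    then show "\<xi> (Suc j) \<in> K (Suc j)" "\<xi> (Suc j) \<notin> K j" "\<sigma> (Suc j) \<in> K j" "\<tau> (Suc j) \<in> K j"
      "\<xi> (Suc j) * \<xi> (Suc j) + \<sigma> (Suc j) * \<xi> (Suc j) + \<tau> (Suc j) = 0"
      "\<And>x. x \<in> K (Suc j) \<Longrightarrow> \<exists>a c. a \<in> K j \<and> c \<in> K j \<and> x = a + c * \<xi> (Suc j)"
      by (simp_all add: gen_def)
  qed (use subfields in auto)
  then show ?thesis by blast
qed

context quadratic_tower
begin

primrec monomials :: "nat \<Rightarrow> 'a list" where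
  "monomials 0 = [1]"
| "monomials (Suc j) = monomials j @ map (\<lambda>y. \<xi> (Suc j) * y) (monomials j)"

lemma length_monomials[simp]: "length (monomials j) = 2 ^ j"
  by (induction j) auto

lemma monomials_Suc_nth:
  "i < 2 ^ j \<Longrightarrow> monomials (Suc j) ! i = monomials j ! i"
  "i < 2 ^ j \<Longrightarrow> monomials (Suc j) ! (2 ^ j + i) = \<xi> (Suc j) * monomials j ! i"
  by (auto simp: nth_append)

lemma K0_subset: "j \<le> m \<Longrightarrow> K 0 \<subseteq> K j"
proof (induction j)
  case (Suc j)
  then show ?case using mono[of j] by simp
qed simp

lemma monomials_in: "j \<le> m \<Longrightarrow> i < 2 ^ j \<Longrightarrow> monomials j ! i \<in> K j"
proof (induction j arbitrary: i)
  case 0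
  then show ?case using subfield_1[OF subfield] by simp
next
  case (Suc j)
  then have j: "j < m" by simp
  show ?case
  proof (cases "i < 2 ^ j")
    case True
    then show ?thesis using Suc mono[OF j] by (auto simp: nth_append)
  next
    case False
    then have "monomials (Suc j) ! i = \<xi> (Suc j) * monomials j ! (i - 2 ^ j)"
      using monomials_Suc_nth(2)[of "i - 2 ^ j" j] Suc.prems by simp
    also have "\<dots> \<in> K (Suc j)"
      using Suc False mono[OF j] by (intro subfield_mult subfield gen_in j) auto
    finally show ?thesis .
  qed
qed

lemma monomials_span:
  "j \<le> m \<Longrightarrow> x \<in> K j \<Longrightarrow> \<exists>d. (\<forall>i. d i \<in> K 0) \<and> x = (\<Sum>i<2 ^ j. d i * monomials j ! i)"
proof (induction j arbitrary: x)
  case 0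
  then show ?case using subfield_0[OF subfield, of 0]
    by (intro exI[of _ "\<lambda>i. if i = 0 then x else 0"]) auto
next
  case (Suc j)
  obtain a c where ac: "a \<in> K j" "c \<in> K j" "x = a + c * \<xi> (Suc j)" using gen_span[of j x] Suc.prems by auto
  have IH: "\<And>x. x \<in> K j \<Longrightarrow> \<exists>d. (\<forall>i. d i \<in> K 0) \<and> x = (\<Sum>i<2 ^ j. d i * monomials j ! i)"
    using Suc by simp
  obtain da where da: "\<forall>i. da i \<in> K 0" "a = (\<Sum>i<2 ^ j. da i * monomials j ! i)" using IH[OF ac(1)] by blast
  obtain dc where dc: "\<forall>i. dc i \<in> K 0" "c = (\<Sum>i<2 ^ j. dc i * monomials j ! i)" using IH[OF ac(2)] by blast
  let ?d = "\<lambda>i. if i < 2 ^ j then da i else dc (i - 2 ^ j)"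
  have "(\<Sum>i<2 ^ Suc j. ?d i * monomials (Suc j) ! i) =
      (\<Sum>i<2 ^ j. ?d i * monomials (Suc j) ! i) + (\<Sum>i<2 ^ j. ?d (2 ^ j + i) * monomials (Suc j) ! (2 ^ j + i))"
    using sum_lessThan_add[of "\<lambda>i. ?d i * monomials (Suc j) ! i" "2 ^ j" "2 ^ j"] by (simp add: mult_2)
  also have "(\<Sum>i<2 ^ j. ?d i * monomials (Suc j) ! i) = a"
    unfolding da(2) by (rule sum.cong) (simp_all add: monomials_Suc_nth del: monomials.simps)
  also have "(\<Sum>i<2 ^ j. ?d (2 ^ j + i) * monomials (Suc j) ! (2 ^ j + i)) = c * \<xi> (Suc j)"
    unfolding dc(2) sum_distrib_right
    by (rule sum.cong) (simp_all add: monomials_Suc_nth mult.assoc mult.left_commute del: monomials.simps)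
  finally show ?case using da dc ac by (intro exI[of _ ?d]) auto
qed

(* The junk value 0 for elements outside K j keeps the coefficients of every program in K 0. *)
definition coords :: "nat \<Rightarrow> 'a \<Rightarrow> nat \<Rightarrow> 'a" where
  "coords j x = (if \<exists>d. (\<forall>i. d i \<in> K 0) \<and> x = (\<Sum>i<2 ^ j. d i * monomials j ! i)
     then SOME d. (\<forall>i. d i \<in> K 0) \<and> x = (\<Sum>i<2 ^ j. d i * monomials j ! i) else (\<lambda>_. 0))"

lemma coords_in: "coords j x i \<in> K 0"
  unfolding coords_def using someI_ex[where P = "\<lambda>d. (\<forall>i. d i \<in> K 0) \<and> x = (\<Sum>i<2 ^ j. d i * monomials j ! i)"]
  by (auto intro: subfield_0 subfield)

lemma coords_sum: "j \<le> m \<Longrightarrow> x \<in> K j \<Longrightarrow> x = (\<Sum>i<2 ^ j. coords j x i * monomials j ! i)"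
  unfolding coords_def using monomials_span[of j x]
    someI_ex[where P = "\<lambda>d. (\<forall>i. d i \<in> K 0) \<and> x = (\<Sum>i<2 ^ j. d i * monomials j ! i)"]
  by auto

(* Used to show that the inversion program does not fail on the identity. *)
lemma gen_combination_eq_one:
  assumes j: "j < m" and A: "A \<in> carrier_mat n n" and B: "B \<in> carrier_mat n n"
    and entries: "\<And>r s. r < n \<Longrightarrow> s < n \<Longrightarrow> A $$ (r,s) \<in> K j \<and> B $$ (r,s) \<in> K j"
    and one: "A + \<xi> (Suc j) \<cdot>\<^sub>m B = 1\<^sub>m n"
  shows "A = 1\<^sub>m n" "B = 0\<^sub>m n n"
proof -
  have F: "is_subfield (K j)" using j by (simp add: subfield)
  have ent: "A $$ (r,s) + \<xi> (Suc j) * B $$ (r,s) = (if r = s then 1 else 0)" if "r < n" "s < n" for r s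
    using arg_cong[OF one, of "\<lambda>M. M $$ (r,s)"] that A B by simp
  have B0: "B $$ (r,s) = 0" if rs: "r < n" "s < n" for r s
  proof (rule ccontr)
    assume "B $$ (r,s) \<noteq> 0"
    then have "\<xi> (Suc j) = ((if r = s then 1 else 0) - A $$ (r,s)) / B $$ (r,s)"
      using ent[OF rs] by (simp add: field_simps)
    also have "\<dots> \<in> K j"
      using entries[OF rs] by (intro subfield_divide[OF F] subfield_diff[OF F]) (auto intro: subfield_0[OF F] subfield_1[OF F])
    finally show False using gen_notin[OF j] by simp
  qed
  show "B = 0\<^sub>m n n" by (rule eq_matI) (use B0 B in auto)
  show "A = 1\<^sub>m n" by (rule eq_matI) (use ent B0 A in auto)
qed
end

fun mult_len :: "nat \<Rightarrow> nat" where
  "mult_len 0 = 1"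
| "mult_len (Suc j) = 3 * mult_len j + 4 * 2 ^ j"

(* A program fragment of level j leaves its result, as 2^j coordinate matrices, in its last 2^j values. *)
definition mult_outs :: "nat \<Rightarrow> nat \<Rightarrow> nat list" where
  "mult_outs j off = [off + mult_len j - 2 ^ j..<off + mult_len j]"

fun inv_len :: "nat \<Rightarrow> nat" where
  "inv_len 0 = 1"
| "inv_len (Suc j) = 2 * inv_len j + 2 * mult_len j + mult_len j + 4 * 2 ^ j"

lemma inv_len_ge: "2 ^ j \<le> inv_len j"
  by (induction j) auto

definition inv_outs :: "nat \<Rightarrow> nat \<Rightarrow> nat list" where
  "inv_outs j off = [off + inv_len j - 2 ^ j..<off + inv_len j]"

lemma length_inv_outs[simp]: "length (inv_outs j off) = 2 ^ j"
  using inv_len_ge[of j] by (simp add: inv_outs_def)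

locale tower_program = quadratic_tower +
  fixes n :: nat
begin

definition from_coords :: "nat \<Rightarrow> 'a mat list \<Rightarrow> 'a mat" where
  "from_coords j Zs = assemble n ((!) (monomials j)) Zs"

lemma from_coords_carrier[simp]: "from_coords j Zs \<in> carrier_mat n n"
  and from_coords_dim[simp]: "dim_row (from_coords j Zs) = n" "dim_col (from_coords j Zs) = n"
  by (simp_all add: from_coords_def)

lemma from_coords_0: "M \<in> carrier_mat n n \<Longrightarrow> from_coords 0 [M] = M"
  by (rule eq_matI) (auto simp: from_coords_def)

lemma from_coords_Suc:
  assumes "length Zs = 2 ^ Suc j"
  shows "from_coords (Suc j) Zs = from_coords j (take (2 ^ j) Zs) + \<xi> (Suc j) \<cdot>\<^sub>m from_coords j (drop (2 ^ j) Zs)"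
proof (rule eq_matI)
  fix r s assume "r < dim_row (from_coords j (take (2 ^ j) Zs) + \<xi> (Suc j) \<cdot>\<^sub>m from_coords j (drop (2 ^ j) Zs))"
    "s < dim_col (from_coords j (take (2 ^ j) Zs) + \<xi> (Suc j) \<cdot>\<^sub>m from_coords j (drop (2 ^ j) Zs))"
  then have rs: "r < n" "s < n" by auto
  have "from_coords (Suc j) Zs $$ (r,s) =
      (\<Sum>i<2 ^ j. monomials (Suc j) ! i * (Zs ! i) $$ (r,s)) +
      (\<Sum>i<2 ^ j. monomials (Suc j) ! (2 ^ j + i) * (Zs ! (2 ^ j + i)) $$ (r,s))"
    using rs assms sum_lessThan_add[of "\<lambda>i. monomials (Suc j) ! i * (Zs ! i) $$ (r,s)" "2 ^ j" "2 ^ j"]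
    by (simp add: from_coords_def mult_2 del: monomials.simps)
  also have "\<dots> = from_coords j (take (2 ^ j) Zs) $$ (r,s) + \<xi> (Suc j) * from_coords j (drop (2 ^ j) Zs) $$ (r,s)"
    using rs assms by (simp add: from_coords_def monomials_Suc_nth sum_distrib_left mult.assoc del: monomials.simps)
  finally show "from_coords (Suc j) Zs $$ (r,s) =
      (from_coords j (take (2 ^ j) Zs) + \<xi> (Suc j) \<cdot>\<^sub>m from_coords j (drop (2 ^ j) Zs)) $$ (r,s)"
    using rs by simp
qed auto

lemma from_coords_entries_in:
  assumes "j \<le> m" "mats_over (K 0) n Zs" "length Zs = 2 ^ j" "r < n" "s < n"
  shows "from_coords j Zs $$ (r,s) \<in> K j"
  using assms mats_over_nth[OF assms(2)] monomials_in[OF assms(1)] K0_subset[OF assms(1)]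
  by (auto simp: from_coords_def intro!: subfield_sum subfield_mult subfield)

definition represents :: "nat \<Rightarrow> 'a mat list \<Rightarrow> nat list \<Rightarrow> 'a mat \<Rightarrow> bool" where
  "represents j vs idx X \<longleftrightarrow> length idx = 2 ^ j \<and> set idx \<subseteq> {..<length vs} \<and> from_coords j (map ((!) vs) idx) = X"

lemma represents_append[intro]: "represents j vs idx X \<Longrightarrow> represents j (vs @ ws) idx X"
proof -
  assume R: "represents j vs idx X"
  then have eq: "map ((!) (vs @ ws)) idx = map ((!) vs) idx" by (auto simp: represents_def nth_append)
  show ?thesis using R unfolding represents_def by (auto simp add: eq)
qed

lemma represents_appended:
  "length ws = 2 ^ j \<Longrightarrow> represents j (vs @ ws) [length vs..<length vs + 2 ^ j] (from_coords j ws)"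
  unfolding represents_def by (auto intro!: arg_cong[where f="from_coords j"] nth_equalityI)

lemma represents_carrier: "represents j vs idx X \<Longrightarrow> X \<in> carrier_mat n n"
  by (auto simp: represents_def)

lemma represents_entries_in:
  "j \<le> m \<Longrightarrow> mats_over (K 0) n vs \<Longrightarrow> represents j vs idx X \<Longrightarrow> r < n \<Longrightarrow> s < n \<Longrightarrow> X $$ (r,s) \<in> K j"
  unfolding represents_def by (auto intro!: from_coords_entries_in mats_over_map_nth)

lemma represents_Suc:
  "represents j vs idx1 A \<Longrightarrow> represents j vs idx2 B \<Longrightarrow>
   represents (Suc j) vs (idx1 @ idx2) (A + \<xi> (Suc j) \<cdot>\<^sub>m B)"
  unfolding represents_def by (auto simp: from_coords_Suc)

lemma represents_SucE:
  assumes "represents (Suc j) vs idx X"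
  obtains A B where "represents j vs (take (2 ^ j) idx) A" "represents j vs (drop (2 ^ j) idx) B"
    "X = A + \<xi> (Suc j) \<cdot>\<^sub>m B"
proof
  show "represents j vs (take (2 ^ j) idx) (from_coords j (map ((!) vs) (take (2 ^ j) idx)))"
    "represents j vs (drop (2 ^ j) idx) (from_coords j (map ((!) vs) (drop (2 ^ j) idx)))"
    using assms set_take_subset[of "2 ^ j" idx] set_drop_subset[of "2 ^ j" idx]
    by (auto simp: represents_def)
  show "X = from_coords j (map ((!) vs) (take (2 ^ j) idx)) + \<xi> (Suc j) \<cdot>\<^sub>m from_coords j (map ((!) vs) (drop (2 ^ j) idx))"
    using assms by (auto simp: represents_def from_coords_Suc take_map drop_map)
qed

definition extends_by :: "'a instr list \<Rightarrow> 'a mat list \<Rightarrow> 'a mat list \<Rightarrow> bool" where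
  "extends_by p vs ws \<longleftrightarrow> run n p vs = Some (vs @ ws) \<and> mats_over (K 0) n ws"

lemma extends_by_length: "extends_by p vs ws \<Longrightarrow> length ws = length p"
  unfolding extends_by_def by (auto dest: run_extends)

lemma extends_by_append:
  "extends_by p vs ws1 \<Longrightarrow> extends_by q (vs @ ws1) ws2 \<Longrightarrow> extends_by (p @ q) vs (ws1 @ ws2)"
  by (simp add: extends_by_def run_append)

lemma extends_byD:
  "extends_by p vs ws \<Longrightarrow> mats_over (K 0) n vs \<Longrightarrow>
   mats_over (K 0) n (vs @ ws) \<and> length (vs @ ws) = length vs + length p"
  using extends_by_length by (auto simp: extends_by_def)

definition lincomb_coeffs :: "nat \<Rightarrow> ('a \<times> nat list) list \<Rightarrow> nat \<Rightarrow> ('a \<times> nat) list" where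
  "lincomb_coeffs j ts i =
     concat (map (\<lambda>t. map (\<lambda>l. (coords j (fst t * monomials j ! l) i, snd t ! l)) [0..<length (snd t)]) ts)"

definition lincomb_prog :: "nat \<Rightarrow> ('a \<times> nat list) list \<Rightarrow> 'a instr list" where
  "lincomb_prog j ts = map Lin (map (lincomb_coeffs j ts) [0..<2 ^ j])"

lemma length_lincomb_prog[simp]: "length (lincomb_prog j ts) = 2 ^ j"
  and count_lincomb_prog[simp]: "count_mul (lincomb_prog j ts) = 0" "count_inv (lincomb_prog j ts) = 0"
  by (simp_all add: lincomb_prog_def del: map_map)

lemma prog_over_lincomb_prog: "prog_over (K 0) (lincomb_prog j ts)"
  by (auto simp: lincomb_prog_def prog_over_def lincomb_coeffs_def coords_in)

lemma from_coords_lincomb_values: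
  assumes j: "j \<le> m" and ts: "\<forall>(c, idx)\<in>set ts. c \<in> K j \<and> length idx = 2 ^ j"
  shows "from_coords j (map (\<lambda>i. lin_value n vs (lincomb_coeffs j ts i)) [0..<2 ^ j]) =
    lincomb n (map (\<lambda>(c, idx). (c, from_coords j (map ((!) vs) idx))) ts)"
  using ts
proof (induction ts)
  case Nil
  then show ?case by (simp add: lincomb_coeffs_def lin_value_Nil from_coords_def assemble_map_zero)
next
  case (Cons t ts)
  obtain c idx where t: "t = (c, idx)" by fastforce
  have c: "c \<in> K j" and idx: "length idx = 2 ^ j" using Cons.prems t by auto
  define single where "single i = map (\<lambda>l. (coords j (c * monomials j ! l) i, idx ! l)) [0..<length idx]" for i
  have "from_coords j (map (\<lambda>i. lin_value n vs (single i)) [0..<2 ^ j]) =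
      assemble n (\<lambda>l. c * monomials j ! l) (map ((!) vs) idx)"
    unfolding from_coords_def single_def
    by (rule assemble_change_of_basis)
      (use coords_sum[OF j] subfield_mult[OF subfield[OF j] c monomials_in[OF j]] idx in auto)
  also have "\<dots> = c \<cdot>\<^sub>m from_coords j (map ((!) vs) idx)"
    by (simp add: assemble_scaled_basis from_coords_def)
  finally have "from_coords j (map (\<lambda>i. lin_value n vs (single i)) [0..<2 ^ j]) =
      c \<cdot>\<^sub>m from_coords j (map ((!) vs) idx)" .
  moreover have split: "lincomb_coeffs j (t # ts) i = single i @ lincomb_coeffs j ts i" for i
    by (simp add: lincomb_coeffs_def single_def t)
  have "from_coords j (map (\<lambda>i. lin_value n vs (lincomb_coeffs j (t # ts) i)) [0..<2 ^ j]) =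
      from_coords j (map (\<lambda>i. lin_value n vs (single i)) [0..<2 ^ j]) +
      from_coords j (map (\<lambda>i. lin_value n vs (lincomb_coeffs j ts i)) [0..<2 ^ j])"
    unfolding from_coords_def split lin_value_append_coeffs by (rule assemble_map_add) (simp_all add: lin_value_def)
  ultimately show ?case using Cons by (simp add: t)
qed

lemma run_lincomb_prog:
  assumes j: "j \<le> m" and vs: "mats_over (K 0) n vs"
    and ts: "list_all2 (\<lambda>(c, idx) X. c \<in> K j \<and> represents j vs idx X) ts Xs"
  shows "\<exists>ws. extends_by (lincomb_prog j ts) vs ws \<and>
     represents j (vs @ ws) [length vs..<length vs + 2 ^ j] (lincomb n (zip (map fst ts) Xs))"
  unfolding extends_by_def
proof (intro exI conjI)
  let ?ws = "map (\<lambda>i. lin_value n vs (lincomb_coeffs j ts i)) [0..<2 ^ j]"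
  have ts': "\<forall>(c, idx)\<in>set ts. c \<in> K j \<and> length idx = 2 ^ j \<and> set idx \<subseteq> {..<length vs}"
    using ts by (induction rule: list_all2_induct) (auto simp: represents_def)
  have "fst c \<in> K 0 \<and> snd c < length vs" if c: "c \<in> set (lincomb_coeffs j ts i)" for c i
  proof -
    obtain t l where t: "t \<in> set ts" "l < length (snd t)" "c = (coords j (fst t * monomials j ! l) i, snd t ! l)"
      using c by (auto simp: lincomb_coeffs_def)
    have "set (snd t) \<subseteq> {..<length vs}" using ts' t(1) by (cases t) auto
    then show ?thesis using t(2,3) coords_in nth_mem by fastforce
  qed
  then have coeffs: "\<forall>c\<in>set (lincomb_coeffs j ts i). fst c \<in> K 0 \<and> snd c < length vs" for i
    by blast
  show "run n (lincomb_prog j ts) vs = Some (vs @ ?ws)"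
    unfolding lincomb_prog_def using coeffs by (subst run_map_Lin) auto
  show "mats_over (K 0) n ?ws"
    using mats_over_lin_value[OF subfield vs coeffs] by (auto simp: mats_over_def)
  have "lincomb n (map (\<lambda>(c, idx). (c, from_coords j (map ((!) vs) idx))) ts) = lincomb n (zip (map fst ts) Xs)"
    using ts by (induction rule: list_all2_induct) (auto simp: represents_def)
  then show "represents j (vs @ ?ws) [length vs..<length vs + 2 ^ j] (lincomb n (zip (map fst ts) Xs))"
    using represents_appended[of ?ws j vs] from_coords_lincomb_values[OF j] ts' by fastforce
qed

lemma run_add_prog:
  assumes j: "j \<le> m" and vs: "mats_over (K 0) n vs" and R: "represents j vs a A" "represents j vs b B"
  shows "\<exists>ws. extends_by (lincomb_prog j [(1, a), (1, b)]) vs ws \<and>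
    represents j (vs @ ws) [length vs..<length vs + 2 ^ j] (A + B)"
  using run_lincomb_prog[OF j vs, of "[(1, a), (1, b)]" "[A, B]"] R subfield_1[OF subfield[OF j]]
  by (auto simp: represents_carrier)

section \<open>Karatsuba multiplication\<close>

definition kara_combine :: "nat \<Rightarrow> nat list \<Rightarrow> nat list \<Rightarrow> nat list \<Rightarrow> 'a instr list" where
  "kara_combine j ac bd p =
     lincomb_prog j [(1, ac), (- \<tau> (Suc j), bd)] @ lincomb_prog j [(1, p), (- 1, ac), (- 1 - \<sigma> (Suc j), bd)]"

lemma run_kara_combine:
  assumes j: "j < m" and vs: "mats_over (K 0) n vs"
    and R: "represents j vs ac AC" "represents j vs bd BD" "represents j vs p P"
  shows "\<exists>ws. extends_by (kara_combine j ac bd p) vs ws \<and>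
     represents (Suc j) (vs @ ws) [length vs..<length vs + 2 ^ Suc j]
       ((AC + (- \<tau> (Suc j)) \<cdot>\<^sub>m BD) + \<xi> (Suc j) \<cdot>\<^sub>m (P + (- 1) \<cdot>\<^sub>m AC + (- 1 - \<sigma> (Suc j)) \<cdot>\<^sub>m BD))"
proof -
  have F: "is_subfield (K j)" using j by (simp add: subfield)
  have c: "1 \<in> K j" "- 1 \<in> K j" "- \<tau> (Suc j) \<in> K j" "- 1 - \<sigma> (Suc j) \<in> K j"
    using coeffs_in[OF j] by (simp_all add: subfield_1[OF F] subfield_uminus[OF F] subfield_diff[OF F])
  have carrier: "AC \<in> carrier_mat n n" "BD \<in> carrier_mat n n" "P \<in> carrier_mat n n"
    using R by (auto intro: represents_carrier)
  obtain ws1 where E1: "extends_by (lincomb_prog j [(1, ac), (- \<tau> (Suc j), bd)]) vs ws1"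
    and R1: "represents j (vs @ ws1) [length vs..<length vs + 2 ^ j] (AC + (- \<tau> (Suc j)) \<cdot>\<^sub>m BD)"
    using run_lincomb_prog[OF less_imp_le[OF j] vs, of "[(1, ac), (- \<tau> (Suc j), bd)]" "[AC, BD]"] R c carrier
    by auto
  have ws1: "mats_over (K 0) n ws1" "length ws1 = 2 ^ j"
    using E1 extends_by_length[OF E1] by (auto simp: extends_by_def)
  obtain ws2 where E2: "extends_by (lincomb_prog j [(1, p), (- 1, ac), (- 1 - \<sigma> (Suc j), bd)]) (vs @ ws1) ws2"
    and R2: "represents j (vs @ ws1 @ ws2) [length vs + 2 ^ j..<length vs + 2 ^ j + 2 ^ j]
      (P + (- 1) \<cdot>\<^sub>m AC + (- 1 - \<sigma> (Suc j)) \<cdot>\<^sub>m BD)"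
    using run_lincomb_prog[OF less_imp_le[OF j], of "vs @ ws1" "[(1, p), (- 1, ac), (- 1 - \<sigma> (Suc j), bd)]"
        "[P, AC, BD]"] vs ws1 represents_append[OF R(1)] represents_append[OF R(2)] represents_append[OF R(3)] c carrier
    by (auto simp: ws1(2))
  have "[length vs..<length vs + 2 ^ Suc j] = [length vs..<length vs + 2 ^ j] @ [length vs + 2 ^ j..<length vs + 2 ^ j + 2 ^ j]"
    using upt_add_eq_append[of "length vs" "length vs + 2 ^ j" "2 ^ j"] by (simp add: mult_2 add.assoc)
  then show ?thesis
    using represents_Suc[OF represents_append[OF R1, of ws2, unfolded append_assoc] R2] extends_by_append[OF E1 E2]
    unfolding kara_combine_def by auto
qed

fun mult_prog :: "nat \<Rightarrow> nat \<Rightarrow> nat list \<Rightarrow> nat list \<Rightarrow> 'a instr list" where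
  "mult_prog 0 off xs ys = [Mul (xs ! 0) (ys ! 0)]"
| "mult_prog (Suc j) off xs ys = (let h = 2 ^ j; o1 = off + mult_len j; o2 = o1 + mult_len j;
     o3 = o2 + h; o4 = o3 + h in
     mult_prog j off (take h xs) (take h ys) @ mult_prog j o1 (drop h xs) (drop h ys) @
     lincomb_prog j [(1, take h xs), (1, drop h xs)] @ lincomb_prog j [(1, take h ys), (1, drop h ys)] @
     mult_prog j o4 [o2..<o3] [o3..<o4] @
     kara_combine j (mult_outs j off) (mult_outs j o1) (mult_outs j o4))"

lemma length_mult_prog[simp]: "length (mult_prog j off xs ys) = mult_len j"
  by (induction j arbitrary: off xs ys) (simp_all add: Let_def kara_combine_def)

lemma count_mult_prog[simp]: "count_mul (mult_prog j off xs ys) = 3 ^ j \<and> count_inv (mult_prog j off xs ys) = 0"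
proof (induction j arbitrary: off xs ys)
  case 0
  show ?case by (simp add: count_mul_def count_inv_def)
qed (simp add: Let_def kara_combine_def)

lemma prog_over_mult_prog: "prog_over (K 0) (mult_prog j off xs ys)"
proof (induction j arbitrary: off xs ys)
  case 0
  show ?case by (simp add: prog_over_def)
qed (simp add: Let_def kara_combine_def prog_over_lincomb_prog)

definition kara_products :: "nat \<Rightarrow> nat \<Rightarrow> nat list \<Rightarrow> nat list \<Rightarrow> nat list \<Rightarrow> nat list \<Rightarrow> 'a instr list" where
  "kara_products j off a b c d = (let o2 = off + mult_len j + mult_len j; o3 = o2 + 2 ^ j; o4 = o3 + 2 ^ j in
     mult_prog j off a c @ mult_prog j (off + mult_len j) b d @
     lincomb_prog j [(1, a), (1, b)] @ lincomb_prog j [(1, c), (1, d)] @ mult_prog j o4 [o2..<o3] [o3..<o4])"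

lemma mult_prog_Suc:
  "mult_prog (Suc j) off xs ys =
     kara_products j off (take (2 ^ j) xs) (drop (2 ^ j) xs) (take (2 ^ j) ys) (drop (2 ^ j) ys) @
     kara_combine j (mult_outs j off) (mult_outs j (off + mult_len j))
       (mult_outs j (off + mult_len j + mult_len j + 2 ^ j + 2 ^ j))"
  by (simp add: kara_products_def Let_def)

lemma run_kara_products:
  assumes mult: "\<And>off xs ys vs X Y. mats_over (K 0) n vs \<Longrightarrow> length vs = off \<Longrightarrow>
      represents j vs xs X \<Longrightarrow> represents j vs ys Y \<Longrightarrow>
      \<exists>ws. extends_by (mult_prog j off xs ys) vs ws \<and> represents j (vs @ ws) (mult_outs j off) (X * Y)"
    and j: "j \<le> m" and vs: "mats_over (K 0) n vs" "length vs = off"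
    and R: "represents j vs a A" "represents j vs b B" "represents j vs c C" "represents j vs d D"
  defines "o1 \<equiv> off + mult_len j + mult_len j"
  shows "\<exists>ws. extends_by (kara_products j off a b c d) vs ws \<and>
      represents j (vs @ ws) (mult_outs j off) (A * C) \<and>
      represents j (vs @ ws) (mult_outs j (off + mult_len j)) (B * D) \<and>
      represents j (vs @ ws) (mult_outs j (o1 + 2 ^ j + 2 ^ j)) ((A + B) * (C + D))"
proof -
  obtain ws1 where E1: "extends_by (mult_prog j off a c) vs ws1" and R1: "represents j (vs @ ws1) (mult_outs j off) (A * C)"
    using mult[OF vs R(1,3)] by blast
  note vs1 = extends_byD[OF E1 vs(1)]
  obtain ws2 where E2: "extends_by (mult_prog j (off + mult_len j) b d) (vs @ ws1) ws2"
    and R2: "represents j (vs @ ws1 @ ws2) (mult_outs j (off + mult_len j)) (B * D)"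
    using mult[OF conjunct1[OF vs1] _ represents_append[OF R(2)] represents_append[OF R(4)]] vs1 vs(2) by auto
  note vs2 = extends_byD[OF E2 conjunct1[OF vs1], unfolded append_assoc]
  obtain ws3 where E3: "extends_by (lincomb_prog j [(1, a), (1, b)]) (vs @ ws1 @ ws2) ws3"
    and R3: "represents j (vs @ ws1 @ ws2 @ ws3) [o1..<o1 + 2 ^ j] (A + B)"
    using run_add_prog[OF j conjunct1[OF vs2] represents_append[OF R(1)] represents_append[OF R(2)]]
      vs1 vs2 vs(2) by (auto simp: o1_def add.assoc)
  note vs3 = extends_byD[OF E3 conjunct1[OF vs2], unfolded append_assoc]
  obtain ws4 where E4: "extends_by (lincomb_prog j [(1, c), (1, d)]) (vs @ ws1 @ ws2 @ ws3) ws4"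
    and R4: "represents j (vs @ ws1 @ ws2 @ ws3 @ ws4) [o1 + 2 ^ j..<o1 + 2 ^ j + 2 ^ j] (C + D)"
    using run_add_prog[OF j conjunct1[OF vs3] represents_append[OF R(3)] represents_append[OF R(4)]]
      vs1 vs2 vs3 vs(2) by (auto simp: o1_def add.assoc)
  note vs4 = extends_byD[OF E4 conjunct1[OF vs3], unfolded append_assoc]
  obtain ws5 where E5: "extends_by (mult_prog j (o1 + 2 ^ j + 2 ^ j) [o1..<o1 + 2 ^ j] [o1 + 2 ^ j..<o1 + 2 ^ j + 2 ^ j])
      (vs @ ws1 @ ws2 @ ws3 @ ws4) ws5"
    and R5: "represents j (vs @ ws1 @ ws2 @ ws3 @ ws4 @ ws5) (mult_outs j (o1 + 2 ^ j + 2 ^ j)) ((A + B) * (C + D))"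
    using mult[OF conjunct1[OF vs4] _ represents_append[OF R3, of ws4, unfolded append_assoc] R4]
      vs1 vs2 vs3 vs4 vs(2) by (auto simp: o1_def add.assoc)
  have "extends_by (kara_products j off a b c d) vs (ws1 @ ws2 @ ws3 @ ws4 @ ws5)"
    using E1 E2 E3 E4 E5 by (simp add: kara_products_def Let_def o1_def extends_by_def run_append)
  then show ?thesis
    using represents_append[OF R1, of "ws2 @ ws3 @ ws4 @ ws5", unfolded append_assoc]
      represents_append[OF R2, of "ws3 @ ws4 @ ws5", unfolded append_assoc] R5
    by blast
qed

lemma run_mult_prog_0:
  assumes vs: "mats_over (K 0) n vs" "length vs = off" and R: "represents 0 vs xs X" "represents 0 vs ys Y"
  shows "\<exists>ws. extends_by (mult_prog 0 off xs ys) vs ws \<and> represents 0 (vs @ ws) (mult_outs 0 off) (X * Y)"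
proof -
  obtain x y where xy: "xs = [x]" "ys = [y]" "x < off" "y < off"
    using R vs(2) by (auto simp: represents_def length_Suc_conv)
  have XY: "X = vs ! x" "Y = vs ! y" "mats_over (K 0) n [vs ! x]" "mats_over (K 0) n [vs ! y]"
    using R vs xy mats_over_nth[OF vs(1)] by (auto simp: represents_def from_coords_0 mats_over_def)
  then have E: "extends_by (mult_prog 0 off xs ys) vs [X * Y]"
    using xy vs(2) mats_over_mult[OF subfield] by (auto simp: extends_by_def)
  have "X * Y \<in> carrier_mat n n" using XY(1-4) by (auto simp: mats_over_def)
  then have "represents 0 (vs @ [X * Y]) (mult_outs 0 off) (X * Y)"
    using represents_appended[of "[X * Y]" 0 vs] vs(2) by (simp add: mult_outs_def from_coords_0)
  with E show ?thesis by blast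
qed

lemma run_mult_prog:
  assumes "j \<le> m" "mats_over (K 0) n vs" "length vs = off" "represents j vs xs X" "represents j vs ys Y"
  shows "\<exists>ws. extends_by (mult_prog j off xs ys) vs ws \<and> represents j (vs @ ws) (mult_outs j off) (X * Y)"
  using assms
proof (induction j arbitrary: off xs ys vs X Y)
  case 0
  show ?case by (rule run_mult_prog_0[OF "0.prems"(2-5)])
next
  case (Suc j)
  have j: "j < m" "j \<le> m" using Suc.prems(1) by auto
  obtain A B where AB: "represents j vs (take (2 ^ j) xs) A" "represents j vs (drop (2 ^ j) xs) B"
    "X = A + \<xi> (Suc j) \<cdot>\<^sub>m B"
    using represents_SucE[OF Suc.prems(4)] .
  obtain C D where CD: "represents j vs (take (2 ^ j) ys) C" "represents j vs (drop (2 ^ j) ys) D"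
    "Y = C + \<xi> (Suc j) \<cdot>\<^sub>m D"
    using represents_SucE[OF Suc.prems(5)] .
  let ?o4 = "off + mult_len j + mult_len j + 2 ^ j + 2 ^ j"
  obtain ws where E: "extends_by (kara_products j off (take (2 ^ j) xs) (drop (2 ^ j) xs)
      (take (2 ^ j) ys) (drop (2 ^ j) ys)) vs ws"
    and R: "represents j (vs @ ws) (mult_outs j off) (A * C)"
      "represents j (vs @ ws) (mult_outs j (off + mult_len j)) (B * D)"
      "represents j (vs @ ws) (mult_outs j ?o4) ((A + B) * (C + D))"
    using run_kara_products[OF Suc.IH[OF j(2)] j(2) Suc.prems(2,3) AB(1,2) CD(1,2)] by blast
  note vs' = extends_byD[OF E Suc.prems(2)]
  obtain ws' where E': "extends_by (kara_combine j (mult_outs j off) (mult_outs j (off + mult_len j)) (mult_outs j ?o4))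
      (vs @ ws) ws'"
    and R': "represents (Suc j) (vs @ ws @ ws') [length (vs @ ws)..<length (vs @ ws) + 2 ^ Suc j]
      ((A * C + (- \<tau> (Suc j)) \<cdot>\<^sub>m (B * D)) +
       \<xi> (Suc j) \<cdot>\<^sub>m ((A + B) * (C + D) + (- 1) \<cdot>\<^sub>m (A * C) + (- 1 - \<sigma> (Suc j)) \<cdot>\<^sub>m (B * D)))"
    using run_kara_combine[OF j(1) conjunct1[OF vs'] R] by (auto simp only: append_assoc)
  have "X * Y = (A * C + (- \<tau> (Suc j)) \<cdot>\<^sub>m (B * D)) +
       \<xi> (Suc j) \<cdot>\<^sub>m ((A + B) * (C + D) + (- 1) \<cdot>\<^sub>m (A * C) + (- 1 - \<sigma> (Suc j)) \<cdot>\<^sub>m (B * D))"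
    unfolding AB(3) CD(3)
    by (rule karatsuba_mat[OF represents_carrier[OF AB(1)] represents_carrier[OF AB(2)]
          represents_carrier[OF CD(1)] represents_carrier[OF CD(2)] gen_root[OF j(1)]])
  moreover have "length (vs @ ws) = off + 3 * mult_len j + 2 * 2 ^ j"
    using vs' Suc.prems(3) by (simp add: kara_products_def Let_def)
  then have "mult_outs (Suc j) off = [length (vs @ ws)..<length (vs @ ws) + 2 ^ Suc j]"
    by (simp add: mult_outs_def add_ac)
  ultimately have "represents (Suc j) (vs @ ws @ ws') (mult_outs (Suc j) off) (X * Y)"
    using R' by simp
  moreover have "extends_by (mult_prog (Suc j) off xs ys) vs (ws @ ws')"
    unfolding mult_prog_Suc by (rule extends_by_append[OF E E'])
  ultimately show ?case by (metis append_assoc)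
qed

section \<open>Inversion\<close>

definition schur_prog :: "nat \<Rightarrow> nat \<Rightarrow> nat list \<Rightarrow> nat list \<Rightarrow> 'a instr list" where
  "schur_prog j off ys ai = (let h = 2 ^ j; o1 = off + mult_len j in
     mult_prog j off ai (drop h ys) @ mult_prog j o1 (drop h ys) (mult_outs j off) @
     lincomb_prog j [(1, take h ys), (\<tau> (Suc j), mult_outs j o1)])"

lemma length_schur_prog[simp]: "length (schur_prog j off ys ai) = 2 * mult_len j + 2 ^ j"
  and count_schur_prog[simp]: "count_mul (schur_prog j off ys ai) = 2 * 3 ^ j" "count_inv (schur_prog j off ys ai) = 0"
  by (simp_all add: schur_prog_def Let_def)

lemma run_schur_prog:
  assumes j: "j < m" and vs: "mats_over (K 0) n vs" "length vs = off"
    and R: "represents j vs (take (2 ^ j) ys) A" "represents j vs (drop (2 ^ j) ys) B" "represents j vs ai Ai"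
  shows "\<exists>ws. extends_by (schur_prog j off ys ai) vs ws \<and> represents j (vs @ ws) (mult_outs j off) (Ai * B) \<and>
     represents j (vs @ ws) [off + 2 * mult_len j..<off + 2 * mult_len j + 2 ^ j] (A + \<tau> (Suc j) \<cdot>\<^sub>m (B * (Ai * B)))"
proof -
  have jm: "j \<le> m" using j by simp
  obtain ws1 where E1: "extends_by (mult_prog j off ai (drop (2 ^ j) ys)) vs ws1"
    and R1: "represents j (vs @ ws1) (mult_outs j off) (Ai * B)"
    using run_mult_prog[OF jm vs R(3,2)] by blast
  note vs1 = extends_byD[OF E1 vs(1)]
  obtain ws2 where E2: "extends_by (mult_prog j (off + mult_len j) (drop (2 ^ j) ys) (mult_outs j off)) (vs @ ws1) ws2"
    and R2: "represents j (vs @ ws1 @ ws2) (mult_outs j (off + mult_len j)) (B * (Ai * B))"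
    using run_mult_prog[OF jm conjunct1[OF vs1] _ represents_append[OF R(2)] R1] vs1 vs(2) by auto
  note vs2 = extends_byD[OF E2 conjunct1[OF vs1], unfolded append_assoc]
  have c: "1 \<in> K j" "\<tau> (Suc j) \<in> K j" using coeffs_in[OF j] subfield_1[OF subfield[OF jm]] by auto
  obtain ws3 where E3: "extends_by (lincomb_prog j [(1, take (2 ^ j) ys), (\<tau> (Suc j), mult_outs j (off + mult_len j))])
      (vs @ ws1 @ ws2) ws3"
    and R3: "represents j (vs @ ws1 @ ws2 @ ws3) [length (vs @ ws1 @ ws2)..<length (vs @ ws1 @ ws2) + 2 ^ j]
      (A + \<tau> (Suc j) \<cdot>\<^sub>m (B * (Ai * B)))"
    using run_lincomb_prog[OF jm conjunct1[OF vs2], of "[(1, take (2 ^ j) ys), (\<tau> (Suc j), mult_outs j (off + mult_len j))]"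
        "[A, B * (Ai * B)]"] represents_append[OF R(1), of "ws1 @ ws2"] R2 c
    by (auto simp: represents_carrier[OF R(1)] represents_carrier[OF R2])
  show ?thesis
    using extends_by_append[OF extends_by_append[OF E1 E2] E3, unfolded append_assoc]
      represents_append[OF R1, of "ws2 @ ws3", unfolded append_assoc] R3 vs1 vs2 vs(2)
    by (auto simp: schur_prog_def Let_def mult_2 add.assoc)
qed

definition inv_combine :: "nat \<Rightarrow> nat \<Rightarrow> nat list \<Rightarrow> nat list \<Rightarrow> 'a instr list" where
  "inv_combine j off w c =
     mult_prog j off w c @ lincomb_prog j [(1, c)] @ lincomb_prog j [(- 1, mult_outs j off)]"

lemma length_inv_combine[simp]: "length (inv_combine j off w c) = mult_len j + 2 * 2 ^ j"
  and count_inv_combine[simp]: "count_mul (inv_combine j off w c) = 3 ^ j" "count_inv (inv_combine j off w c) = 0"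
  by (simp_all add: inv_combine_def)

lemma run_inv_combine:
  assumes j: "j < m" and vs: "mats_over (K 0) n vs" "length vs = off"
    and R: "represents j vs w W" "represents j vs c C"
  shows "\<exists>ws. extends_by (inv_combine j off w c) vs ws \<and>
     represents (Suc j) (vs @ ws) [off + mult_len j..<off + mult_len j + 2 ^ Suc j] (C + \<xi> (Suc j) \<cdot>\<^sub>m ((- 1) \<cdot>\<^sub>m (W * C)))"
proof -
  have jm: "j \<le> m" using j by simp
  have c: "1 \<in> K j" "- 1 \<in> K j" using subfield_1[OF subfield[OF jm]] subfield_uminus[OF subfield[OF jm]] by auto
  obtain ws1 where E1: "extends_by (mult_prog j off w c) vs ws1" and R1: "represents j (vs @ ws1) (mult_outs j off) (W * C)"
    using run_mult_prog[OF jm vs R] by blast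
  note vs1 = extends_byD[OF E1 vs(1)]
  obtain ws2 where E2: "extends_by (lincomb_prog j [(1, c)]) (vs @ ws1) ws2"
    and R2: "represents j (vs @ ws1 @ ws2) [length (vs @ ws1)..<length (vs @ ws1) + 2 ^ j] C"
    using run_lincomb_prog[OF jm conjunct1[OF vs1], of "[(1, c)]" "[C]"] represents_append[OF R(2)] c
    by (auto simp: represents_carrier[OF R(2)])
  note vs2 = extends_byD[OF E2 conjunct1[OF vs1], unfolded append_assoc]
  obtain ws3 where E3: "extends_by (lincomb_prog j [(- 1, mult_outs j off)]) (vs @ ws1 @ ws2) ws3"
    and R3: "represents j (vs @ ws1 @ ws2 @ ws3) [length (vs @ ws1 @ ws2)..<length (vs @ ws1 @ ws2) + 2 ^ j]
      ((- 1) \<cdot>\<^sub>m (W * C))"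
    using run_lincomb_prog[OF jm conjunct1[OF vs2], of "[(- 1, mult_outs j off)]" "[W * C]"]
      represents_append[OF R1, of ws2, unfolded append_assoc] c
    by (auto simp: represents_carrier[OF R1])
  have "[off + mult_len j..<off + mult_len j + 2 ^ Suc j] =
      [length (vs @ ws1)..<length (vs @ ws1) + 2 ^ j] @ [length (vs @ ws1 @ ws2)..<length (vs @ ws1 @ ws2) + 2 ^ j]"
    using vs1 vs2 vs(2) upt_add_eq_append[of "off + mult_len j" "off + mult_len j + 2 ^ j" "2 ^ j"]
    by (simp add: mult_2 add.assoc)
  then show ?thesis
    using extends_by_append[OF extends_by_append[OF E1 E2] E3, unfolded append_assoc]
      represents_Suc[OF represents_append[OF R2, of ws3, unfolded append_assoc] R3]
    by (auto simp: inv_combine_def)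
qed

fun inv_prog :: "nat \<Rightarrow> nat \<Rightarrow> nat list \<Rightarrow> 'a instr list" where
  "inv_prog 0 off ys = [Inv (ys ! 0)]"
| "inv_prog (Suc j) off ys = (let h = 2 ^ j; o1 = off + h; o2 = o1 + inv_len j;
     o4 = o2 + 2 * mult_len j; o5 = o4 + h; o6 = o5 + inv_len j in
     lincomb_prog j [(1, take h ys), (- \<sigma> (Suc j), drop h ys)] @
     inv_prog j o1 [off..<o1] @
     schur_prog j o2 ys (inv_outs j o1) @
     inv_prog j o5 [o4..<o5] @
     inv_combine j o6 (mult_outs j o2) (inv_outs j o5))"

lemma length_inv_prog[simp]: "length (inv_prog j off ys) = inv_len j"
  by (induction j arbitrary: off ys) (simp_all add: Let_def)

lemma count_inv_prog: "count_mul (inv_prog j off ys) = 3 * (3 ^ j - 2 ^ j) \<and> count_inv (inv_prog j off ys) = 2 ^ j"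
proof (induction j arbitrary: off ys)
  case 0
  show ?case by (simp add: count_mul_def count_inv_def)
next
  case (Suc j)
  have "(2::nat) ^ j \<le> 3 ^ j" by (simp add: power_mono)
  then show ?case using Suc by (simp add: Let_def)
qed

lemma prog_over_inv_prog: "prog_over (K 0) (inv_prog j off ys)"
proof (induction j arbitrary: off ys)
  case 0
  show ?case by (simp add: prog_over_def)
qed (simp add: Let_def schur_prog_def inv_combine_def prog_over_lincomb_prog prog_over_mult_prog)

(* The clause X \<noteq> 1 is what makes the failure locus of the whole program a proper subset. *)
definition inverts_or_fails :: "nat \<Rightarrow> 'a instr list \<Rightarrow> 'a mat list \<Rightarrow> nat list \<Rightarrow> 'a mat \<Rightarrow> bool" where
  "inverts_or_fails j p vs outs X \<longleftrightarrow> (run n p vs = None \<and> X \<noteq> 1\<^sub>m n) \<or>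
     (\<exists>ws Y. extends_by p vs ws \<and> represents j (vs @ ws) outs Y \<and> X * Y = 1\<^sub>m n)"

lemma inverts_or_fails_prefix:
  assumes E: "extends_by p vs ws" and I: "inverts_or_fails j q (vs @ ws) outs X"
  shows "inverts_or_fails j (p @ q) vs outs X"
  using I[unfolded inverts_or_fails_def]
proof (elim disjE exE conjE)
  assume "run n q (vs @ ws) = None" "X \<noteq> 1\<^sub>m n"
  then show ?thesis using E by (simp add: inverts_or_fails_def extends_by_def run_append)
next
  fix ws' Y assume E': "extends_by q (vs @ ws) ws'" and R': "represents j ((vs @ ws) @ ws') outs Y"
    and Y: "X * Y = 1\<^sub>m n"
  show ?thesis unfolding inverts_or_fails_def
    by (intro disjI2 exI[of _ "ws @ ws'"] exI[of _ Y] conjI extends_by_append[OF E E']) (use R' Y in simp_all)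
qed

lemma run_inv_prog_0:
  assumes vs: "mats_over (K 0) n vs" "length vs = off" and R: "represents 0 vs ys X"
  shows "inverts_or_fails 0 (inv_prog 0 off ys) vs (inv_outs 0 off) X"
proof -
  obtain y where y: "ys = [y]" "y < off" using R vs(2) by (auto simp: represents_def length_Suc_conv)
  have X: "X = vs ! y" "X \<in> carrier_mat n n" "\<And>r s. r < n \<Longrightarrow> s < n \<Longrightarrow> X $$ (r,s) \<in> K 0"
    using R y vs mats_over_nth[OF vs(1)] by (auto simp: represents_def from_coords_0)
  show ?thesis
  proof (cases "det X = 0")
    case True
    then show ?thesis using exec_instr_Inv_singular[of vs y n] X y by (auto simp: inverts_or_fails_def)
  next
    case False
    define Y where "Y = (1 / det X) \<cdot>\<^sub>m adj_mat X"
    have Y: "Y \<in> carrier_mat n n" "X * Y = 1\<^sub>m n" "Y * X = 1\<^sub>m n"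
      using adj_mat_inverse[OF X(2) False] adj_mat(1)[OF X(2)] by (auto simp: Y_def)
    have "mats_over (K 0) n [Y]"
      using inverse_entries_in_subfield[OF subfield X(2,3) Y(1,2)] Y(1) by (auto simp: mats_over_def)
    then have "extends_by (inv_prog 0 off ys) vs [Y]"
      using exec_instr_Inv[of y vs n Y] X Y y vs(2) by (simp add: extends_by_def)
    moreover have "represents 0 (vs @ [Y]) (inv_outs 0 off) Y"
      using represents_appended[of "[Y]" 0 vs] Y(1) vs(2) by (simp add: inv_outs_def from_coords_0)
    ultimately show ?thesis using Y(2) unfolding inverts_or_fails_def by blast
  qed
qed

definition inv_tail_prog :: "nat \<Rightarrow> nat \<Rightarrow> nat list \<Rightarrow> nat list \<Rightarrow> 'a instr list" where
  "inv_tail_prog j off ys ai = (let o5 = off + 2 * mult_len j + 2 ^ j in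
     schur_prog j off ys ai @ inv_prog j o5 [off + 2 * mult_len j..<o5] @
     inv_combine j (o5 + inv_len j) (mult_outs j off) (inv_outs j o5))"

lemma inv_prog_Suc:
  "inv_prog (Suc j) off ys =
     lincomb_prog j [(1, take (2 ^ j) ys), (- \<sigma> (Suc j), drop (2 ^ j) ys)] @
     inv_prog j (off + 2 ^ j) [off..<off + 2 ^ j] @ inv_tail_prog j (off + 2 ^ j + inv_len j) ys (inv_outs j (off + 2 ^ j))"
  by (simp add: inv_tail_prog_def Let_def)

lemma run_inv_tail:
  assumes inv: "\<And>off ys vs X. mats_over (K 0) n vs \<Longrightarrow> length vs = off \<Longrightarrow> represents j vs ys X \<Longrightarrow>
      inverts_or_fails j (inv_prog j off ys) vs (inv_outs j off) X"
    and j: "j < m" and vs: "mats_over (K 0) n vs" "length vs = off"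
    and R: "represents j vs (take (2 ^ j) ys) A" "represents j vs (drop (2 ^ j) ys) B" "represents j vs ai Ai"
    and Ai: "(A + (- \<sigma> (Suc j)) \<cdot>\<^sub>m B) * Ai = 1\<^sub>m n"
    and one: "A + \<xi> (Suc j) \<cdot>\<^sub>m B = 1\<^sub>m n \<Longrightarrow> A + \<tau> (Suc j) \<cdot>\<^sub>m (B * (Ai * B)) = 1\<^sub>m n"
  shows "inverts_or_fails (Suc j) (inv_tail_prog j off ys ai) vs
    [off + 2 * mult_len j + 2 ^ j + inv_len j + mult_len j..<off + 2 * mult_len j + 2 ^ j + inv_len j + mult_len j + 2 ^ Suc j]
    (A + \<xi> (Suc j) \<cdot>\<^sub>m B)"
proof -
  let ?S = "A + \<tau> (Suc j) \<cdot>\<^sub>m (B * (Ai * B))"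
  let ?o5 = "off + 2 * mult_len j + 2 ^ j"
  let ?outs = "[?o5 + inv_len j + mult_len j..<?o5 + inv_len j + mult_len j + 2 ^ Suc j]"
  obtain ws1 where E1: "extends_by (schur_prog j off ys ai) vs ws1"
    and R1: "represents j (vs @ ws1) (mult_outs j off) (Ai * B)" "represents j (vs @ ws1) [off + 2 * mult_len j..<?o5] ?S"
    using run_schur_prog[OF j vs R] by blast
  note vs1 = extends_byD[OF E1 vs(1)]
  have len1: "length (vs @ ws1) = ?o5" using vs1 vs(2) by simp
  have "inverts_or_fails (Suc j) (inv_prog j ?o5 [off + 2 * mult_len j..<?o5] @
      inv_combine j (?o5 + inv_len j) (mult_outs j off) (inv_outs j ?o5)) (vs @ ws1) ?outs (A + \<xi> (Suc j) \<cdot>\<^sub>m B)"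
    using inv[OF conjunct1[OF vs1] len1 R1(2), unfolded inverts_or_fails_def]
  proof (elim disjE exE conjE)
    assume None: "run n (inv_prog j ?o5 [off + 2 * mult_len j..<?o5]) (vs @ ws1) = None" and "?S \<noteq> 1\<^sub>m n"
    then have "A + \<xi> (Suc j) \<cdot>\<^sub>m B \<noteq> 1\<^sub>m n" using one by blast
    then show ?thesis using None by (simp add: inverts_or_fails_def run_append)
  next
    fix ws2 C assume E2: "extends_by (inv_prog j ?o5 [off + 2 * mult_len j..<?o5]) (vs @ ws1) ws2"
      and R2: "represents j ((vs @ ws1) @ ws2) (inv_outs j ?o5) C" and C: "?S * C = 1\<^sub>m n"
    note vs2 = extends_byD[OF E2 conjunct1[OF vs1], unfolded append_assoc]
    have len2: "length (vs @ ws1 @ ws2) = ?o5 + inv_len j" using vs2 len1 by simp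
    let ?Y = "C + \<xi> (Suc j) \<cdot>\<^sub>m ((- 1) \<cdot>\<^sub>m (Ai * B * C))"
    obtain ws3 where E3: "extends_by (inv_combine j (?o5 + inv_len j) (mult_outs j off) (inv_outs j ?o5)) (vs @ ws1 @ ws2) ws3"
      and R3: "represents (Suc j) ((vs @ ws1 @ ws2) @ ws3) ?outs ?Y"
      using run_inv_combine[OF j conjunct1[OF vs2] len2 represents_append[OF R1(1), of ws2, unfolded append_assoc]
          R2[unfolded append_assoc]] by blast
    have "(A + \<xi> (Suc j) \<cdot>\<^sub>m B) * ?Y = 1\<^sub>m n"
      by (rule quadratic_inverse_mat[OF represents_carrier[OF R(1)] represents_carrier[OF R(2)]
            represents_carrier[OF R(3)] represents_carrier[OF R2] gen_root[OF j] Ai C])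
    moreover have "represents (Suc j) ((vs @ ws1) @ ws2 @ ws3) ?outs ?Y"
      using R3 by (simp only: append_assoc)
    ultimately show ?thesis unfolding inverts_or_fails_def
      by (intro disjI2 exI[of _ "ws2 @ ws3"] exI[of _ ?Y] conjI extends_by_append[OF E2 E3[folded append_assoc]])
  qed
  then show ?thesis unfolding inv_tail_prog_def Let_def by (rule inverts_or_fails_prefix[OF E1])
qed

lemma run_inv_prog:
  assumes "j \<le> m" "mats_over (K 0) n vs" "length vs = off" "represents j vs ys X"
  shows "inverts_or_fails j (inv_prog j off ys) vs (inv_outs j off) X"
  using assms
proof (induction j arbitrary: off ys vs X)
  case 0
  show ?case by (rule run_inv_prog_0[OF "0.prems"(2-4)])
next
  case (Suc j)
  have j: "j < m" "j \<le> m" using Suc.prems(1) by auto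
  let ?o1 = "off + 2 ^ j"
  obtain A B where AB: "represents j vs (take (2 ^ j) ys) A" "represents j vs (drop (2 ^ j) ys) B"
    "X = A + \<xi> (Suc j) \<cdot>\<^sub>m B"
    using represents_SucE[OF Suc.prems(4)] .
  have one: "A = 1\<^sub>m n \<and> B = 0\<^sub>m n n" if "X = 1\<^sub>m n"
    using gen_combination_eq_one[OF j(1) represents_carrier[OF AB(1)] represents_carrier[OF AB(2)]] that AB(3)
      represents_entries_in[OF j(2) Suc.prems(2) AB(1)] represents_entries_in[OF j(2) Suc.prems(2) AB(2)] by auto
  obtain ws1 where E1: "extends_by (lincomb_prog j [(1, take (2 ^ j) ys), (- \<sigma> (Suc j), drop (2 ^ j) ys)]) vs ws1"
    and R1: "represents j (vs @ ws1) [off..<?o1] (A + (- \<sigma> (Suc j)) \<cdot>\<^sub>m B)"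
    using run_lincomb_prog[OF j(2) Suc.prems(2), of "[(1, take (2 ^ j) ys), (- \<sigma> (Suc j), drop (2 ^ j) ys)]" "[A, B]"]
      AB subfield_1[OF subfield[OF j(2)]] subfield_uminus[OF subfield[OF j(2)] coeffs_in(1)[OF j(1)]]
      represents_carrier[OF AB(2)] Suc.prems(3)
    by auto
  note vs1 = extends_byD[OF E1 Suc.prems(2)]
  have len1: "length (vs @ ws1) = ?o1" using vs1 Suc.prems(3) by simp
  have "inverts_or_fails (Suc j) (inv_prog j ?o1 [off..<?o1] @ inv_tail_prog j (?o1 + inv_len j) ys (inv_outs j ?o1))
    (vs @ ws1) (inv_outs (Suc j) off) X"
    using Suc.IH[OF j(2) conjunct1[OF vs1] len1 R1, unfolded inverts_or_fails_def]
  proof (elim disjE exE conjE)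
    assume None: "run n (inv_prog j ?o1 [off..<?o1]) (vs @ ws1) = None"
      and "A + (- \<sigma> (Suc j)) \<cdot>\<^sub>m B \<noteq> 1\<^sub>m n"
    then have "X \<noteq> 1\<^sub>m n" using one by auto
    then show ?thesis using None by (simp add: inverts_or_fails_def run_append)
  next
    fix ws2 Ai assume E2: "extends_by (inv_prog j ?o1 [off..<?o1]) (vs @ ws1) ws2"
      and R2: "represents j ((vs @ ws1) @ ws2) (inv_outs j ?o1) Ai" and Ai: "(A + (- \<sigma> (Suc j)) \<cdot>\<^sub>m B) * Ai = 1\<^sub>m n"
    note vs2 = extends_byD[OF E2 conjunct1[OF vs1], unfolded append_assoc]
    have len2: "length (vs @ ws1 @ ws2) = ?o1 + inv_len j" using vs2 len1 by simp
    have one': "A + \<tau> (Suc j) \<cdot>\<^sub>m (B * (Ai * B)) = 1\<^sub>m n" if "A + \<xi> (Suc j) \<cdot>\<^sub>m B = 1\<^sub>m n"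
    proof -
      have AB1: "A = 1\<^sub>m n" "B = 0\<^sub>m n n" using one AB(3) that by auto
      then have "Ai = 1\<^sub>m n" using Ai represents_carrier[OF R2] by simp
      then show ?thesis using AB1 by simp
    qed
    have "inv_outs (Suc j) off = [?o1 + inv_len j + 2 * mult_len j + 2 ^ j + inv_len j + mult_len j..<
        ?o1 + inv_len j + 2 * mult_len j + 2 ^ j + inv_len j + mult_len j + 2 ^ Suc j]"
      by (simp add: inv_outs_def; intro arg_cong2[where f = upt]; linarith)
    then have "inverts_or_fails (Suc j) (inv_tail_prog j (?o1 + inv_len j) ys (inv_outs j ?o1)) ((vs @ ws1) @ ws2)
        (inv_outs (Suc j) off) X"
      using run_inv_tail[OF Suc.IH[OF j(2)] j(1) conjunct1[OF vs2] len2 represents_append[OF AB(1)]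
          represents_append[OF AB(2)] R2[unfolded append_assoc] Ai one'] AB(3) by (simp only: append_assoc)
    then show ?thesis by (rule inverts_or_fails_prefix[OF E2])
  qed
  then show ?case unfolding inv_prog_Suc by (rule inverts_or_fails_prefix[OF E1])
qed

definition inversion_prog :: "(nat \<Rightarrow> 'a) \<Rightarrow> (nat \<Rightarrow> nat \<Rightarrow> 'a) \<Rightarrow> 'a instr list" where
  "inversion_prog b Mout =
     basis_change_prog (\<lambda>l. coords m (b l)) [0..<2 ^ m] (2 ^ m) @
     inv_prog m (2 * 2 ^ m) [2 ^ m..<2 * 2 ^ m] @
     basis_change_prog Mout (inv_outs m (2 * 2 ^ m)) (2 ^ m)"

definition inversion_outs :: "nat list" where
  "inversion_outs = [2 * 2 ^ m + inv_len m..<3 * 2 ^ m + inv_len m]"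

lemma run_inversion_prog:
  assumes b: "\<And>l. l < 2 ^ m \<Longrightarrow> b l \<in> K m"
    and Mout: "\<And>i l. i < 2 ^ m \<Longrightarrow> l < 2 ^ m \<Longrightarrow> Mout i l \<in> K 0"
      "\<And>i. i < 2 ^ m \<Longrightarrow> monomials m ! i = (\<Sum>l<2 ^ m. Mout i l * b l)"
    and x: "x \<in> coord_space (K 0) (2 ^ m) n"
  shows "(run n (inversion_prog b Mout) x = None \<and> assemble n b x \<noteq> 1\<^sub>m n) \<or>
    (\<exists>vs. run n (inversion_prog b Mout) x = Some vs \<and>
       assemble n b x * assemble n b (map ((!) vs) inversion_outs) = 1\<^sub>m n)"
proof -
  have x': "mats_over (K 0) n x" "length x = 2 ^ m" using x by (auto simp: coord_space_iff)
  obtain ws1 where run1: "run n (basis_change_prog (\<lambda>l. coords m (b l)) [0..<2 ^ m] (2 ^ m)) x = Some (x @ ws1)"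
    and ws1: "mats_over (K 0) n ws1" "length ws1 = 2 ^ m"
    and val1: "from_coords m ws1 = assemble n b x"
    using run_basis_change_prog[OF subfield x'(1), where xs = "[0..<2 ^ m]" and M = "\<lambda>l. coords m (b l)"
        and N = "2 ^ m" and u = b and w = "(!) (monomials m)"]
      coords_in coords_sum[OF le_refl b] x'(2) map_nth[of x]
    by (auto simp: from_coords_def atLeast0LessThan)
  have R1: "represents m (x @ ws1) [2 ^ m..<2 * 2 ^ m] (assemble n b x)"
    using represents_appended[OF ws1(2), of x] val1 x'(2) by (simp add: mult_2)
  consider "run n (inv_prog m (2 * 2 ^ m) [2 ^ m..<2 * 2 ^ m]) (x @ ws1) = None" "assemble n b x \<noteq> 1\<^sub>m n"
    | ws2 Y where "extends_by (inv_prog m (2 * 2 ^ m) [2 ^ m..<2 * 2 ^ m]) (x @ ws1) ws2"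
      "represents m (x @ ws1 @ ws2) (inv_outs m (2 * 2 ^ m)) Y" "assemble n b x * Y = 1\<^sub>m n"
    using run_inv_prog[OF le_refl _ _ R1, unfolded inverts_or_fails_def] x'(1) ws1 x'(2) by (fastforce simp: mult_2)
  then show ?thesis
  proof cases
    case 1
    then show ?thesis by (simp add: inversion_prog_def run_append run1)
  next
    case (2 ws2 Y)
    have lens: "length (x @ ws1 @ ws2) = 2 * 2 ^ m + inv_len m"
      using 2(1) extends_by_length x'(2) ws1(2) by auto
    have sub: "set (inv_outs m (2 * 2 ^ m)) \<subseteq> {..<length (x @ ws1 @ ws2)}"
      using lens by (auto simp: inv_outs_def)
    have mats: "mats_over (K 0) n (x @ ws1 @ ws2)" using x'(1) ws1(1) 2(1) by (simp add: extends_by_def)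
    obtain ws3 where run3: "run n (basis_change_prog Mout (inv_outs m (2 * 2 ^ m)) (2 ^ m)) (x @ ws1 @ ws2) =
        Some ((x @ ws1 @ ws2) @ ws3)"
      and ws3: "length ws3 = 2 ^ m" "assemble n b ws3 = from_coords m (map ((!) (x @ ws1 @ ws2)) (inv_outs m (2 * 2 ^ m)))"
      using run_basis_change_prog[OF subfield[of 0] mats sub, where N = "2 ^ m" and M = Mout
          and u = "(!) (monomials m)" and w = b] Mout
      by (auto simp: from_coords_def)
    have "map ((!) ((x @ ws1 @ ws2) @ ws3)) inversion_outs = ws3"
      using lens ws3(1) by (intro nth_equalityI) (auto simp: inversion_outs_def nth_append add.assoc)
    then show ?thesis
      using 2 run1 run3 ws3(2) by (auto simp: inversion_prog_def run_append extends_by_def represents_def)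
  qed
qed

lemma count_inversion_prog:
  "count_mul (inversion_prog b Mout) = 3 * (3 ^ m - 2 ^ m)" "count_inv (inversion_prog b Mout) = 2 ^ m"
  using count_inv_prog by (simp_all add: inversion_prog_def)

lemma inversion_algorithm:
  assumes basis: "is_basis_over (K 0) (K m) b (2 ^ m)"
  shows "\<exists>p outs.
     prog_over (K 0) p \<and>
     count_mul p = 3 * (3 ^ m - 2 ^ m) \<and> count_inv p = 2 ^ m \<and>
     length outs = 2 ^ m \<and> (\<forall>i\<in>set outs. i < 2 ^ m + length p) \<and>
     generic (K 0) (2 ^ m) n
       (\<lambda>Xs. \<exists>vs. run n p Xs = Some vs \<and>
          assemble n b Xs * assemble n b (map (\<lambda>i. vs ! i) outs) = 1\<^sub>m n \<and>
          assemble n b (map (\<lambda>i. vs ! i) outs) * assemble n b Xs = 1\<^sub>m n)"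
proof -
  have b: "\<And>l. l < 2 ^ m \<Longrightarrow> b l \<in> K m" using basis by (simp add: is_basis_over_def)
  have "\<forall>i\<in>{..<2 ^ m}. \<exists>c. (\<forall>l<2 ^ m. c l \<in> K 0) \<and> monomials m ! i = (\<Sum>l<2 ^ m. c l * b l)"
    using is_basis_over_span[OF basis] monomials_in[OF le_refl] by blast
  then obtain Mout where Mout: "\<And>i l. i < 2 ^ m \<Longrightarrow> l < 2 ^ m \<Longrightarrow> Mout i l \<in> K 0"
    "\<And>i. i < 2 ^ m \<Longrightarrow> monomials m ! i = (\<Sum>l<2 ^ m. Mout i l * b l)"
    by (metis bchoice lessThan_iff)
  define p where "p = inversion_prog b Mout"
  have p: "prog_over (K 0) p"
    using Mout(1) coords_in by (auto simp: p_def inversion_prog_def prog_over_inv_prog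
        intro!: prog_over_basis_change_prog)
  obtain x0 where x0: "x0 \<in> coord_space (K 0) (2 ^ m) n" "assemble n b x0 = 1\<^sub>m n"
    using coords_of_one[OF subfield[OF le0] basis subfield_1[OF subfield[OF le_refl]]] by blast
  have "generic (K 0) (2 ^ m) n (\<lambda>Xs. \<exists>vs. run n p Xs = Some vs \<and>
      assemble n b Xs * assemble n b (map ((!) vs) inversion_outs) = 1\<^sub>m n \<and>
      assemble n b (map ((!) vs) inversion_outs) * assemble n b Xs = 1\<^sub>m n)"
  proof (rule generic_run_success[OF subfield[OF le0] p x0(1)])
    show "run n p x0 \<noteq> None" using run_inversion_prog[OF b Mout x0(1)] x0(2) by (auto simp: p_def)
    fix x vs assume x: "x \<in> coord_space (K 0) (2 ^ m) n" and run: "run n p x = Some vs"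
    then have "assemble n b x * assemble n b (map ((!) vs) inversion_outs) = 1\<^sub>m n"
      using run_inversion_prog[OF b Mout x] by (auto simp: p_def)
    then show "assemble n b x * assemble n b (map ((!) vs) inversion_outs) = 1\<^sub>m n \<and>
        assemble n b (map ((!) vs) inversion_outs) * assemble n b x = 1\<^sub>m n"
      using mat_mult_left_right_inverse[OF assemble_carrier assemble_carrier] by blast
  qed
  moreover have "length p = 2 * 2 ^ m + inv_len m" by (simp add: p_def inversion_prog_def)
  moreover have "count_mul p = 3 * (3 ^ m - 2 ^ m)" "count_inv p = 2 ^ m"
    using count_inversion_prog by (simp_all add: p_def)
  ultimately show ?thesis using p by (intro exI[of _ p] exI[of _ inversion_outs]) (auto simp: inversion_outs_def)
qed

end

theorem proposition4p7:
  fixes K :: "nat \<Rightarrow> 'a::field set" and m n :: nat and b :: "nat \<Rightarrow> 'a"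
  assumes subfields: "\<forall>j\<le>m. is_subfield (K j)"
    and tower: "\<forall>j\<in>{1..m}. K (j - 1) \<subseteq> K j \<and> K (j - 1) \<noteq> K j \<and> ext_degree_eq (K (j - 1)) (K j) 2"
    and n: "n \<ge> 1"
    and basis: "is_basis_over (K 0) (K m) b (2 ^ m)"
  shows "\<exists>p outs.
     prog_over (K 0) p \<and>
     count_mul p = 3 * (3 ^ m - 2 ^ m) \<and> count_inv p = 2 ^ m \<and>
     length outs = 2 ^ m \<and> (\<forall>i\<in>set outs. i < 2 ^ m + length p) \<and>
     generic (K 0) (2 ^ m) n
       (\<lambda>Xs. \<exists>vs. run n p Xs = Some vs \<and>
          assemble n b Xs * assemble n b (map (\<lambda>i. vs ! i) outs) = 1\<^sub>m n \<and>
          assemble n b (map (\<lambda>i. vs ! i) outs) * assemble n b Xs = 1\<^sub>m n)"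
proof -
  obtain \<xi> \<sigma> \<tau> where "quadratic_tower K m \<xi> \<sigma> \<tau>"
    using quadratic_tower_exists[OF subfields tower] by blast
  then interpret tower_program K m \<xi> \<sigma> \<tau> n
    by (simp add: tower_program_def)
  show ?thesis by (rule inversion_algorithm[OF basis])
qed

end
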